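(* Let $\mathcal{E}$ be the variety of loops described in the context, let $n\ge3$, let $\mathcal{F}_n\in\mathcal{E}$ be the free loop of $\mathcal{E}$ on $n$ generators, and let $M_3$ be the free loop of $\mathcal{E}$ on $3$ generators (the free code loop with 3 generators). Then $\mathcal{F}_n$ can be embedded (by an injective loop homomorphism) in a direct product of copies of $M_3$.
   Context: A loop is a set with a binary operation $xy$ such that any two of $x,y,z$ in $xy=z$ determine the third uniquely, and with a two-sided identity $1$. It is Moufang if $((xy)x)z=x(y(xz))$ for all $x,y,z$. The loop commutator $[x,y]$ is the unique element with $xy=(yx)[x,y]$, and the associator $(x,y,z)$ the unique element with $(xy)z=(x(yz))(x,y,z)$. $\mathcal{E}$ is the variety of Moufang loops satisfying the identities $x^4=1$, $[x,y]^2=1$, $(x,y,z)^2=1$, $[x^2,y]=1$, $[[x,y],t]=1$, $[(x,y,z),t]=1$, $(x^2,y,z)=1$, $([x,y],z,t)=1$, $((x,y,z),t,s)=1$; it is the variety generated by all code loops (Moufang loops $L$ with a central subgroup $A$ of order 2 such that $L/A$ is an elementary abelian 2-group). *)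

theory Defs
  imports "HOL-Library.FuncSet"
begin

record 'a loop =
  lcarrier :: "'a set"
  lmult :: "'a \<Rightarrow> 'a \<Rightarrow> 'a"
  lone :: 'a

definition is_loop :: "'a loop \<Rightarrow> bool" where
  "is_loop L \<longleftrightarrow>
     lone L \<in> lcarrier L \<and>
     (\<forall>x\<in>lcarrier L. \<forall>y\<in>lcarrier L. lmult L x y \<in> lcarrier L) \<and>
     (\<forall>x\<in>lcarrier L. lmult L (lone L) x = x \<and> lmult L x (lone L) = x) \<and>
     (\<forall>a\<in>lcarrier L. \<forall>b\<in>lcarrier L. \<exists>!x. x \<in> lcarrier L \<and> lmult L a x = b) \<and>
     (\<forall>a\<in>lcarrier L. \<forall>b\<in>lcarrier L. \<exists>!y. y \<in> lcarrier L \<and> lmult L y a = b)"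

definition is_moufang :: "'a loop \<Rightarrow> bool" where
  "is_moufang L \<longleftrightarrow> is_loop L \<and>
     (\<forall>x\<in>lcarrier L. \<forall>y\<in>lcarrier L. \<forall>z\<in>lcarrier L.
        lmult L (lmult L (lmult L x y) x) z = lmult L x (lmult L y (lmult L x z)))"

definition lldiv :: "'a loop \<Rightarrow> 'a \<Rightarrow> 'a \<Rightarrow> 'a" where
  "lldiv L a b = (THE x. x \<in> lcarrier L \<and> lmult L a x = b)"

definition lrdiv :: "'a loop \<Rightarrow> 'a \<Rightarrow> 'a \<Rightarrow> 'a" where
  "lrdiv L b a = (THE y. y \<in> lcarrier L \<and> lmult L y a = b)"

definition lcomm :: "'a loop \<Rightarrow> 'a \<Rightarrow> 'a \<Rightarrow> 'a" where
  "lcomm L x y = (THE c. c \<in> lcarrier L \<and> lmult L x y = lmult L (lmult L y x) c)"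

definition lassoc :: "'a loop \<Rightarrow> 'a \<Rightarrow> 'a \<Rightarrow> 'a \<Rightarrow> 'a" where
  "lassoc L x y z = (THE a. a \<in> lcarrier L \<and>
      lmult L (lmult L x y) z = lmult L (lmult L x (lmult L y z)) a)"

definition lsq :: "'a loop \<Rightarrow> 'a \<Rightarrow> 'a" where
  "lsq L x = lmult L x x"

definition in_E :: "'a loop \<Rightarrow> bool" where
  "in_E L \<longleftrightarrow> is_moufang L \<and>
    (\<forall>x\<in>lcarrier L. \<forall>y\<in>lcarrier L. \<forall>z\<in>lcarrier L. \<forall>t\<in>lcarrier L. \<forall>s\<in>lcarrier L.
       lmult L (lsq L x) (lsq L x) = lone L \<and>
       lsq L (lcomm L x y) = lone L \<and>
       lsq L (lassoc L x y z) = lone L \<and>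
       lcomm L (lsq L x) y = lone L \<and>
       lcomm L (lcomm L x y) t = lone L \<and>
       lcomm L (lassoc L x y z) t = lone L \<and>
       lassoc L (lsq L x) y z = lone L \<and>
       lassoc L (lcomm L x y) z t = lone L \<and>
       lassoc L (lassoc L x y z) t s = lone L)"

inductive_set lgen :: "'a loop \<Rightarrow> 'a set \<Rightarrow> 'a set" for L S where
  gen_base: "x \<in> S \<Longrightarrow> x \<in> lcarrier L \<Longrightarrow> x \<in> lgen L S"
| gen_one: "lone L \<in> lgen L S"
| gen_mult: "x \<in> lgen L S \<Longrightarrow> y \<in> lgen L S \<Longrightarrow> lmult L x y \<in> lgen L S"
| gen_ldiv: "x \<in> lgen L S \<Longrightarrow> y \<in> lgen L S \<Longrightarrow> lldiv L x y \<in> lgen L S"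
| gen_rdiv: "x \<in> lgen L S \<Longrightarrow> y \<in> lgen L S \<Longrightarrow> lrdiv L x y \<in> lgen L S"

definition loop_hom :: "'a loop \<Rightarrow> 'b loop \<Rightarrow> ('a \<Rightarrow> 'b) \<Rightarrow> bool" where
  "loop_hom L K h \<longleftrightarrow>
     (\<forall>x\<in>lcarrier L. h x \<in> lcarrier K) \<and>
     (\<forall>x\<in>lcarrier L. \<forall>y\<in>lcarrier L. h (lmult L x y) = lmult K (h x) (h y)) \<and>
     h (lone L) = lone K"

text \<open>The universal property is quantified over loops carried by nat;
  since F is generated by the g i, this is equivalent to the universal property for
  all loops of E (finitely generated loops are countable).\<close>
definition free_E_loop :: "nat \<Rightarrow> 'a loop \<Rightarrow> (nat \<Rightarrow> 'a) \<Rightarrow> bool" where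
  "free_E_loop n F g \<longleftrightarrow>
     in_E F \<and> (\<forall>i<n. g i \<in> lcarrier F) \<and>
     lgen F (g ` {..<n}) = lcarrier F \<and>
     (\<forall>(L :: nat loop) f. in_E L \<longrightarrow> (\<forall>i<n. f i \<in> lcarrier L) \<longrightarrow>
        (\<exists>h. loop_hom F L h \<and> (\<forall>i<n. h (g i) = f i)))"

definition prod_loop :: "'i set \<Rightarrow> 'b loop \<Rightarrow> ('i \<Rightarrow> 'b) loop" where
  "prod_loop I M =
     \<lparr> lcarrier = PiE I (\<lambda>_. lcarrier M),
       lmult = (\<lambda>x y. \<lambda>i\<in>I. lmult M (x i) (y i)),
       lone = (\<lambda>i\<in>I. lone M) \<rparr>"

end

(* In a loop of E generated by x 0, ..., x (n-1), squares, commutators and associators are central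
   involutions, and the associator is symmetric and trilinear. Hence every element is an ordered
   product of distinct generators times a product of squares x i ^ 2, commutators [x i, x j] with
   i < j and associators (x i, x j, x k) with i < j < k, each occurring at most once. Mapping at
   most three generators to independent elements of the octonion loop O16 and all others to 1
   detects each of these exponents, so homomorphisms into O16 of this kind separate the points
   of the free loop F n. Each of them factors through the free loop M 3 on three generators,
   hence the homomorphisms F n -> M 3 separate points, and evaluation at all of them embeds F n
   into a direct power of M 3. *)

theory Submission
  imports Defs "HOL-Library.Countable_Set"
begin

locale loop =
  fixes L :: "'a loop"
  assumes is_loop: "is_loop L"
begin

abbreviation G where "G \<equiv> lcarrier L"
abbreviation mult (infixl "\<odot>" 70) where "x \<odot> y \<equiv> lmult L x y"
abbreviation one ("\<one>") where "\<one> \<equiv> lone L"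
abbreviation comm where "comm \<equiv> lcomm L"
abbreviation assoc where "assoc \<equiv> lassoc L"
abbreviation sq where "sq \<equiv> lsq L"
abbreviation ldiv where "ldiv \<equiv> lldiv L"
abbreviation rdiv where "rdiv \<equiv> lrdiv L"

lemmas is_loop_unfolded = is_loop[unfolded is_loop_def]

lemma one_closed [simp]: "\<one> \<in> G"
  using is_loop_unfolded by (elim conjE)

lemma mult_closed [simp]: "x \<in> G \<Longrightarrow> y \<in> G \<Longrightarrow> x \<odot> y \<in> G"
  using is_loop_unfolded[THEN conjunct2, THEN conjunct1] by blast

lemma one_mult [simp]: "x \<in> G \<Longrightarrow> \<one> \<odot> x = x"
  using is_loop_unfolded[THEN conjunct2, THEN conjunct2, THEN conjunct1] by blast

lemma mult_one [simp]: "x \<in> G \<Longrightarrow> x \<odot> \<one> = x"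
  using is_loop_unfolded[THEN conjunct2, THEN conjunct2, THEN conjunct1] by blast

lemma ex1_left_solution: "a \<in> G \<Longrightarrow> b \<in> G \<Longrightarrow> \<exists>!x. x \<in> G \<and> a \<odot> x = b"
  using is_loop_unfolded[THEN conjunct2, THEN conjunct2, THEN conjunct2, THEN conjunct1] by blast

lemma ex1_right_solution: "a \<in> G \<Longrightarrow> b \<in> G \<Longrightarrow> \<exists>!y. y \<in> G \<and> y \<odot> a = b"
  using is_loop_unfolded[THEN conjunct2, THEN conjunct2, THEN conjunct2, THEN conjunct2] by blast

lemma left_cancel: "a \<in> G \<Longrightarrow> x \<in> G \<Longrightarrow> y \<in> G \<Longrightarrow> a \<odot> x = a \<odot> y \<Longrightarrow> x = y"
  using ex1_left_solution[of a "a \<odot> y"] mult_closed[of a y] unfolding Ex1_def by blast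

lemma right_cancel: "a \<in> G \<Longrightarrow> x \<in> G \<Longrightarrow> y \<in> G \<Longrightarrow> x \<odot> a = y \<odot> a \<Longrightarrow> x = y"
  using ex1_right_solution[of a "y \<odot> a"] mult_closed[of y a] unfolding Ex1_def by blast

lemma ldiv: "a \<in> G \<Longrightarrow> b \<in> G \<Longrightarrow> ldiv a b \<in> G \<and> a \<odot> ldiv a b = b"
  unfolding lldiv_def by (rule theI', rule ex1_left_solution)

lemma ldiv_closed [simp]: "a \<in> G \<Longrightarrow> b \<in> G \<Longrightarrow> ldiv a b \<in> G"
  using ldiv by blast

lemma mult_ldiv [simp]: "a \<in> G \<Longrightarrow> b \<in> G \<Longrightarrow> a \<odot> ldiv a b = b"
  using ldiv by blast

lemma ldiv_unique: "a \<in> G \<Longrightarrow> x \<in> G \<Longrightarrow> a \<odot> x = b \<Longrightarrow> ldiv a b = x"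
  by (metis ldiv left_cancel mult_closed)

lemma rdiv: "a \<in> G \<Longrightarrow> b \<in> G \<Longrightarrow> rdiv b a \<in> G \<and> rdiv b a \<odot> a = b"
  unfolding lrdiv_def by (rule theI', rule ex1_right_solution)

lemma rdiv_closed [simp]: "a \<in> G \<Longrightarrow> b \<in> G \<Longrightarrow> rdiv b a \<in> G"
  using rdiv by blast

lemma rdiv_mult [simp]: "a \<in> G \<Longrightarrow> b \<in> G \<Longrightarrow> rdiv b a \<odot> a = b"
  using rdiv by blast

lemma comm: "x \<in> G \<Longrightarrow> y \<in> G \<Longrightarrow> comm x y \<in> G \<and> x \<odot> y = (y \<odot> x) \<odot> comm x y"
proof -
  assume "x \<in> G" "y \<in> G"
  then have "\<exists>!c. c \<in> G \<and> (y \<odot> x) \<odot> c = x \<odot> y"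
    by (intro ex1_left_solution) simp_all
  then have "\<exists>!c. c \<in> G \<and> x \<odot> y = (y \<odot> x) \<odot> c"
    by (metis (no_types, lifting))
  from theI'[OF this] show ?thesis unfolding lcomm_def .
qed

lemma comm_closed [simp]: "x \<in> G \<Longrightarrow> y \<in> G \<Longrightarrow> comm x y \<in> G"
  using comm by blast

lemma comm_eq: "x \<in> G \<Longrightarrow> y \<in> G \<Longrightarrow> x \<odot> y = (y \<odot> x) \<odot> comm x y"
  using comm by blast

lemma comm_unique: "x \<in> G \<Longrightarrow> y \<in> G \<Longrightarrow> c \<in> G \<Longrightarrow> x \<odot> y = (y \<odot> x) \<odot> c \<Longrightarrow> comm x y = c"
  by (metis comm left_cancel mult_closed)

lemma assoc: "x \<in> G \<Longrightarrow> y \<in> G \<Longrightarrow> z \<in> G \<Longrightarrow>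
    assoc x y z \<in> G \<and> (x \<odot> y) \<odot> z = (x \<odot> (y \<odot> z)) \<odot> assoc x y z"
proof -
  assume "x \<in> G" "y \<in> G" "z \<in> G"
  then have "\<exists>!c. c \<in> G \<and> (x \<odot> (y \<odot> z)) \<odot> c = (x \<odot> y) \<odot> z"
    by (intro ex1_left_solution) simp_all
  then have "\<exists>!c. c \<in> G \<and> (x \<odot> y) \<odot> z = (x \<odot> (y \<odot> z)) \<odot> c"
    by (metis (no_types, lifting))
  from theI'[OF this] show ?thesis unfolding lassoc_def .
qed

lemma assoc_closed [simp]: "x \<in> G \<Longrightarrow> y \<in> G \<Longrightarrow> z \<in> G \<Longrightarrow> assoc x y z \<in> G"
  using assoc by blast

lemma assoc_eq:
  "x \<in> G \<Longrightarrow> y \<in> G \<Longrightarrow> z \<in> G \<Longrightarrow> (x \<odot> y) \<odot> z = (x \<odot> (y \<odot> z)) \<odot> assoc x y z"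
  using assoc by blast

lemma assoc_unique:
  "x \<in> G \<Longrightarrow> y \<in> G \<Longrightarrow> z \<in> G \<Longrightarrow> c \<in> G \<Longrightarrow> (x \<odot> y) \<odot> z = (x \<odot> (y \<odot> z)) \<odot> c \<Longrightarrow>
    assoc x y z = c"
  by (metis assoc left_cancel mult_closed)

lemma sq_eq: "sq x = x \<odot> x"
  by (simp add: lsq_def)

lemma sq_closed [simp]: "x \<in> G \<Longrightarrow> sq x \<in> G"
  by (simp add: sq_eq)

lemma comm_eq_one_iff: "x \<in> G \<Longrightarrow> y \<in> G \<Longrightarrow> comm x y = \<one> \<longleftrightarrow> x \<odot> y = y \<odot> x"
  by (metis comm_unique comm_eq one_closed mult_one mult_closed)

lemma assoc_eq_one_iff:
  "x \<in> G \<Longrightarrow> y \<in> G \<Longrightarrow> z \<in> G \<Longrightarrow> assoc x y z = \<one> \<longleftrightarrow> (x \<odot> y) \<odot> z = x \<odot> (y \<odot> z)"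
  by (metis assoc_unique assoc_eq one_closed mult_one mult_closed)

lemma comm_one_left [simp]: "y \<in> G \<Longrightarrow> comm \<one> y = \<one>"
  by (simp add: comm_eq_one_iff)

lemma comm_one_right [simp]: "y \<in> G \<Longrightarrow> comm y \<one> = \<one>"
  by (simp add: comm_eq_one_iff)

lemma comm_self [simp]: "y \<in> G \<Longrightarrow> comm y y = \<one>"
  by (simp add: comm_eq_one_iff)

lemma assoc_one_1 [simp]: "y \<in> G \<Longrightarrow> z \<in> G \<Longrightarrow> assoc \<one> y z = \<one>"
  by (simp add: assoc_eq_one_iff)

lemma assoc_one_2 [simp]: "y \<in> G \<Longrightarrow> z \<in> G \<Longrightarrow> assoc y \<one> z = \<one>"
  by (simp add: assoc_eq_one_iff)

lemma assoc_one_3 [simp]: "y \<in> G \<Longrightarrow> z \<in> G \<Longrightarrow> assoc y z \<one> = \<one>"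
  by (simp add: assoc_eq_one_iff)

lemma sq_one [simp]: "sq \<one> = \<one>"
  by (simp add: sq_eq)

lemma lgen_closed: "w \<in> lgen L S \<Longrightarrow> w \<in> G"
  by (induction rule: lgen.induct) auto

end

lemma loop_hom_closed: "loop_hom L K h \<Longrightarrow> a \<in> lcarrier L \<Longrightarrow> h a \<in> lcarrier K"
  unfolding loop_hom_def by blast

lemma loop_hom_mult:
  "loop_hom L K h \<Longrightarrow> a \<in> lcarrier L \<Longrightarrow> b \<in> lcarrier L \<Longrightarrow> h (lmult L a b) = lmult K (h a) (h b)"
  unfolding loop_hom_def by blast

lemma loop_hom_one: "loop_hom L K h \<Longrightarrow> h (lone L) = lone K"
  unfolding loop_hom_def by blast

lemma loop_hom_comp: "loop_hom A B f \<Longrightarrow> loop_hom B C g \<Longrightarrow> loop_hom A C (\<lambda>x. g (f x))"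
  unfolding loop_hom_def by auto

lemma loop_hom_sq: "loop_hom L K h \<Longrightarrow> a \<in> lcarrier L \<Longrightarrow> h (lsq L a) = lsq K (h a)"
  unfolding lsq_def by (rule loop_hom_mult)

context
  fixes L :: "'a loop" and K :: "'b loop" and h :: "'a \<Rightarrow> 'b"
  assumes L: "is_loop L" and K: "is_loop K" and h: "loop_hom L K h"
begin

interpretation L: loop L using L by (rule loop.intro)
interpretation K: loop K using K by (rule loop.intro)

lemma loop_hom_ldiv:
  assumes a: "a \<in> L.G" and b: "b \<in> L.G"
  shows "h (L.ldiv a b) = K.ldiv (h a) (h b)"
proof -
  have "lmult K (h a) (h (L.ldiv a b)) = h b"
    using loop_hom_mult[OF h a L.ldiv_closed[OF a b]] a b by simp
  then show ?thesis
    using a b by (intro sym[OF K.ldiv_unique]) (simp_all add: loop_hom_closed[OF h])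
qed

lemma loop_hom_comm:
  assumes a: "a \<in> L.G" and b: "b \<in> L.G"
  shows "h (L.comm a b) = K.comm (h a) (h b)"
proof -
  have "h (lmult L a b) = h (lmult L (lmult L b a) (L.comm a b))"
    using L.comm_eq[OF a b] by simp
  then have "lmult K (h a) (h b) = lmult K (lmult K (h b) (h a)) (h (L.comm a b))"
    using a b by (simp add: loop_hom_mult[OF h])
  then show ?thesis
    using a b by (intro sym[OF K.comm_unique]) (simp_all add: loop_hom_closed[OF h])
qed

lemma loop_hom_assoc:
  assumes a: "a \<in> L.G" and b: "b \<in> L.G" and c: "c \<in> L.G"
  shows "h (L.assoc a b c) = K.assoc (h a) (h b) (h c)"
proof -
  have "h (lmult L (lmult L a b) c) = h (lmult L (lmult L a (lmult L b c)) (L.assoc a b c))"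
    using L.assoc_eq[OF a b c] by simp
  then have "lmult K (lmult K (h a) (h b)) (h c) =
      lmult K (lmult K (h a) (lmult K (h b) (h c))) (h (L.assoc a b c))"
    using a b c by (simp add: loop_hom_mult[OF h])
  then show ?thesis
    using a b c by (intro sym[OF K.assoc_unique]) (simp_all add: loop_hom_closed[OF h])
qed

end

lemma is_loop_if_in_E: "in_E L \<Longrightarrow> is_loop L"
  unfolding in_E_def is_moufang_def by blast

section \<open>Transport of structure along an injection\<close>

definition image_loop :: "('a \<Rightarrow> 'b) \<Rightarrow> 'a loop \<Rightarrow> 'b loop" where
  "image_loop \<phi> L = \<lparr> lcarrier = \<phi> ` lcarrier L,
     lmult = (\<lambda>a b. \<phi> (lmult L (inv_into (lcarrier L) \<phi> a) (inv_into (lcarrier L) \<phi> b))),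
     lone = \<phi> (lone L) \<rparr>"

lemma image_loop_simps:
  "lcarrier (image_loop \<phi> L) = \<phi> ` lcarrier L"
  "lmult (image_loop \<phi> L) a b = \<phi> (lmult L (inv_into (lcarrier L) \<phi> a) (inv_into (lcarrier L) \<phi> b))"
  "lone (image_loop \<phi> L) = \<phi> (lone L)"
  by (simp_all add: image_loop_def)

context
  fixes L :: "'a loop" and \<phi> :: "'a \<Rightarrow> 'b"
  assumes L: "is_loop L" and inj: "inj_on \<phi> (lcarrier L)"
begin

interpretation loop L using L by (rule loop.intro)

lemma loop_hom_image_loop: "loop_hom L (image_loop \<phi> L) \<phi>"
  unfolding loop_hom_def image_loop_simps using inj by (simp add: inv_into_f_f)

lemma loop_hom_image_loop_inv: "loop_hom (image_loop \<phi> L) L (inv_into G \<phi>)"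
  unfolding loop_hom_def image_loop_simps using inj by (auto simp: inv_into_f_f inv_into_into)

lemma is_loop_image_loop: "is_loop (image_loop \<phi> L)"
proof -
  let ?K = "image_loop \<phi> L"
  have inv: "inv_into G \<phi> (\<phi> x) = x" if "x \<in> G" for x
    using inj that by (simp add: inv_into_f_f)
  have mult: "lmult ?K (\<phi> u) (\<phi> v) = \<phi> (u \<odot> v)" if "u \<in> G" "v \<in> G" for u v
    using that by (simp add: image_loop_simps inv)
  have eq_iff: "\<phi> u = \<phi> v \<longleftrightarrow> u = v" if "u \<in> G" "v \<in> G" for u v
    using inj that by (auto dest: inj_onD)
  have left: "\<exists>!x. x \<in> lcarrier ?K \<and> lmult ?K (\<phi> u) x = \<phi> v" if uv: "u \<in> G" "v \<in> G" for u v
  proof -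
    obtain x where x: "x \<in> G" "u \<odot> x = v"
      using ex1_left_solution[OF uv] by blast
    show ?thesis
    proof (rule ex1I[of _ "\<phi> x"])
      show "\<phi> x \<in> lcarrier ?K \<and> lmult ?K (\<phi> u) (\<phi> x) = \<phi> v"
        using x uv by (simp add: image_loop_simps(1) mult)
      fix y assume y: "y \<in> lcarrier ?K \<and> lmult ?K (\<phi> u) y = \<phi> v"
      then obtain z where z: "z \<in> G" "y = \<phi> z"
        by (auto simp: image_loop_simps(1))
      then have "u \<odot> z = u \<odot> x"
        using x y z uv by (simp add: mult eq_iff)
      then show "y = \<phi> x"
        using x z uv left_cancel by blast
    qed
  qed
  have right: "\<exists>!y. y \<in> lcarrier ?K \<and> lmult ?K y (\<phi> u) = \<phi> v" if uv: "u \<in> G" "v \<in> G" for u v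
  proof -
    obtain y where y: "y \<in> G" "y \<odot> u = v"
      using ex1_right_solution[OF uv] by blast
    show ?thesis
    proof (rule ex1I[of _ "\<phi> y"])
      show "\<phi> y \<in> lcarrier ?K \<and> lmult ?K (\<phi> y) (\<phi> u) = \<phi> v"
        using y uv by (simp add: image_loop_simps(1) mult)
      fix w assume w: "w \<in> lcarrier ?K \<and> lmult ?K w (\<phi> u) = \<phi> v"
      then obtain z where z: "z \<in> G" "w = \<phi> z"
        by (auto simp: image_loop_simps(1))
      then have "z \<odot> u = y \<odot> u"
        using y w z uv by (simp add: mult eq_iff)
      then show "w = \<phi> y"
        using y z uv right_cancel by blast
    qed
  qed
  show ?thesis
    unfolding is_loop_def
  proof (intro conjI ballI)
    show "lone ?K \<in> lcarrier ?K"
      by (simp add: image_loop_simps)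
  next
    fix a b assume "a \<in> lcarrier ?K" "b \<in> lcarrier ?K"
    then show "lmult ?K a b \<in> lcarrier ?K"
      by (auto simp: image_loop_simps(1) mult)
  next
    fix a assume "a \<in> lcarrier ?K"
    then show "lmult ?K (lone ?K) a = a"
      by (auto simp: image_loop_simps(1,3) mult)
  next
    fix a assume "a \<in> lcarrier ?K"
    then show "lmult ?K a (lone ?K) = a"
      by (auto simp: image_loop_simps(1,3) mult)
  next
    fix a b assume "a \<in> lcarrier ?K" "b \<in> lcarrier ?K"
    then obtain u v where "u \<in> G" "v \<in> G" "a = \<phi> u" "b = \<phi> v"
      by (auto simp: image_loop_simps(1))
    then show "\<exists>!x. x \<in> lcarrier ?K \<and> lmult ?K a x = b"
      using left[of u v] by simp
  next
    fix a b assume "a \<in> lcarrier ?K" "b \<in> lcarrier ?K"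
    then obtain u v where "u \<in> G" "v \<in> G" "a = \<phi> u" "b = \<phi> v"
      by (auto simp: image_loop_simps(1))
    then show "\<exists>!y. y \<in> lcarrier ?K \<and> lmult ?K y a = b"
      using right[of u v] by simp
  qed
qed

end

lemma in_E_surj_hom_image:
  assumes L: "is_loop L" and K: "is_loop K" and h: "loop_hom L K \<phi>"
    and surj: "\<phi> ` lcarrier L = lcarrier K" and E: "in_E L"
  shows "in_E K"
proof -
  interpret loop L using L by (rule loop.intro)
  note hom_ops = loop_hom_mult[OF h, symmetric] loop_hom_comm[OF L K h, symmetric]
    loop_hom_assoc[OF L K h, symmetric] loop_hom_sq[OF h, symmetric] loop_hom_one[OF h, symmetric]
  have moufang: "((x \<odot> y) \<odot> x) \<odot> z = x \<odot> (y \<odot> (x \<odot> z))" if "x \<in> G" "y \<in> G" "z \<in> G" for x y z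
    using E that unfolding in_E_def is_moufang_def by blast
  have identities: "sq x \<odot> sq x = \<one> \<and> sq (comm x y) = \<one> \<and> sq (assoc x y z) = \<one> \<and>
       comm (sq x) y = \<one> \<and> comm (comm x y) t = \<one> \<and> comm (assoc x y z) t = \<one> \<and>
       assoc (sq x) y z = \<one> \<and> assoc (comm x y) z t = \<one> \<and> assoc (assoc x y z) t s = \<one>"
    if "x \<in> G" "y \<in> G" "z \<in> G" "t \<in> G" "s \<in> G" for x y z t s
    using E that unfolding in_E_def by blast
  have "is_moufang K"
    unfolding is_moufang_def
  proof (intro conjI K ballI)
    fix a b c assume "a \<in> lcarrier K" "b \<in> lcarrier K" "c \<in> lcarrier K"
    then obtain x y z where "x \<in> G" "y \<in> G" "z \<in> G" "a = \<phi> x" "b = \<phi> y" "c = \<phi> z"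
      by (auto simp flip: surj)
    then show "lmult K (lmult K (lmult K a b) a) c = lmult K a (lmult K b (lmult K a c))"
      by (simp add: hom_ops moufang)
  qed
  moreover have "lmult K (lsq K a) (lsq K a) = lone K \<and> lsq K (lcomm K a b) = lone K \<and>
       lsq K (lassoc K a b c) = lone K \<and> lcomm K (lsq K a) b = lone K \<and>
       lcomm K (lcomm K a b) d = lone K \<and> lcomm K (lassoc K a b c) d = lone K \<and>
       lassoc K (lsq K a) b c = lone K \<and> lassoc K (lcomm K a b) c d = lone K \<and>
       lassoc K (lassoc K a b c) d f = lone K"
    if in_K: "a \<in> lcarrier K" "b \<in> lcarrier K" "c \<in> lcarrier K" "d \<in> lcarrier K" "f \<in> lcarrier K"
    for a b c d f
  proof -
    obtain x y z t s where "x \<in> G" "y \<in> G" "z \<in> G" "t \<in> G" "s \<in> G"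
      "a = \<phi> x" "b = \<phi> y" "c = \<phi> z" "d = \<phi> t" "f = \<phi> s"
      using in_K by (auto simp flip: surj)
    then show ?thesis
      using identities[of x y z t s] by (simp add: hom_ops)
  qed
  ultimately show ?thesis
    unfolding in_E_def by blast
qed

lemma in_E_image_loop:
  assumes E: "in_E L" and inj: "inj_on \<phi> (lcarrier L)"
  shows "in_E (image_loop \<phi> L)"
proof -
  have L: "is_loop L"
    using E by (rule is_loop_if_in_E)
  show ?thesis
    using in_E_surj_hom_image[OF L is_loop_image_loop[OF L inj] loop_hom_image_loop[OF L inj]] E
    by (simp add: image_loop_simps)
qed

datatype loop_term = Var nat | Unit | Mult loop_term loop_term
  | Ldiv loop_term loop_term | Rdiv loop_term loop_term

instance loop_term :: countable
  by countable_datatype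

primrec eval_term :: "'a loop \<Rightarrow> (nat \<Rightarrow> 'a) \<Rightarrow> loop_term \<Rightarrow> 'a" where
  "eval_term L k (Var i) = k i"
| "eval_term L k Unit = lone L"
| "eval_term L k (Mult a b) = lmult L (eval_term L k a) (eval_term L k b)"
| "eval_term L k (Ldiv a b) = lldiv L (eval_term L k a) (eval_term L k b)"
| "eval_term L k (Rdiv a b) = lrdiv L (eval_term L k a) (eval_term L k b)"

lemma lgen_subset_range_eval_term: "lgen L (k ` A) \<subseteq> range (eval_term L k)"
proof
  fix w assume "w \<in> lgen L (k ` A)"
  then show "w \<in> range (eval_term L k)"
  proof (induction rule: lgen.induct)
    case (gen_base x)
    then obtain i where "x = eval_term L k (Var i)"
      by auto
    then show ?case by (rule range_eqI)
  next
    case gen_one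
    have "lone L = eval_term L k Unit" by simp
    then show ?case by (rule range_eqI)
  next
    case (gen_mult x y)
    then obtain s t where "x = eval_term L k s" "y = eval_term L k t"
      by blast
    then have "lmult L x y = eval_term L k (Mult s t)" by simp
    then show ?case by (rule range_eqI)
  next
    case (gen_ldiv x y)
    then obtain s t where "x = eval_term L k s" "y = eval_term L k t"
      by blast
    then have "lldiv L x y = eval_term L k (Ldiv s t)" by simp
    then show ?case by (rule range_eqI)
  next
    case (gen_rdiv x y)
    then obtain s t where "x = eval_term L k s" "y = eval_term L k t"
      by blast
    then have "lrdiv L x y = eval_term L k (Rdiv s t)" by simp
    then show ?case by (rule range_eqI)
  qed
qed

lemma countable_lgen: "countable (lgen L (k ` (A :: nat set)))"
  by (rule countable_subset[OF lgen_subset_range_eval_term]) simp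

text \<open>The universal property in \<^const>\<open>free_E_loop\<close> only speaks about loops carried by \<^typ>\<open>nat\<close>;
  it extends to all countable loops of \<open>E\<close> by transport of structure.\<close>

lemma free_E_loop_extend:
  assumes F: "free_E_loop n F g" and K: "in_E K" and countable: "countable (lcarrier K)"
    and f: "\<And>i. i < n \<Longrightarrow> f i \<in> lcarrier K"
  shows "\<exists>h. loop_hom F K h \<and> (\<forall>i<n. h (g i) = f i)"
proof -
  obtain \<phi> :: "'b \<Rightarrow> nat" where \<phi>: "inj_on \<phi> (lcarrier K)"
    using countable unfolding countable_def by blast
  let ?K' = "image_loop \<phi> K" and ?\<psi> = "inv_into (lcarrier K) \<phi>"
  have univ: "\<And>(L :: nat loop) f. in_E L \<Longrightarrow> \<forall>i<n. f i \<in> lcarrier L \<Longrightarrow>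
      \<exists>h. loop_hom F L h \<and> (\<forall>i<n. h (g i) = f i)"
    using F unfolding free_E_loop_def by blast
  have K': "in_E ?K'"
    using K \<phi> by (rule in_E_image_loop)
  have f': "\<forall>i<n. \<phi> (f i) \<in> lcarrier ?K'"
    using f by (simp add: image_loop_simps)
  obtain h' where h': "loop_hom F ?K' h'" "\<forall>i<n. h' (g i) = \<phi> (f i)"
    using univ[OF K' f'] by blast
  have "loop_hom F K (\<lambda>x. ?\<psi> (h' x))"
    using h'(1) loop_hom_image_loop_inv[OF is_loop_if_in_E[OF K] \<phi>] by (rule loop_hom_comp)
  moreover have "\<forall>i<n. ?\<psi> (h' (g i)) = f i"
    using h'(2) f \<phi> by (simp add: inv_into_f_f)
  ultimately show ?thesis by blast
qed

section \<open>The centre of a loop in \<open>E\<close>\<close>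

locale E_loop = loop +
  assumes E: "in_E L"
begin

lemma moufang: "x \<in> G \<Longrightarrow> y \<in> G \<Longrightarrow> z \<in> G \<Longrightarrow> ((x \<odot> y) \<odot> x) \<odot> z = x \<odot> (y \<odot> (x \<odot> z))"
  using E unfolding in_E_def is_moufang_def by blast

lemma E_identities:
  assumes "x \<in> G" "y \<in> G" "z \<in> G" "t \<in> G" "s \<in> G"
  shows "sq x \<odot> sq x = \<one> \<and> sq (comm x y) = \<one> \<and> sq (assoc x y z) = \<one> \<and>
    comm (sq x) y = \<one> \<and> comm (comm x y) t = \<one> \<and> comm (assoc x y z) t = \<one> \<and>
    assoc (sq x) y z = \<one> \<and> assoc (comm x y) z t = \<one> \<and> assoc (assoc x y z) t s = \<one>"
  using E assms unfolding in_E_def by blast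

lemma left_alternative: "x \<in> G \<Longrightarrow> z \<in> G \<Longrightarrow> (x \<odot> x) \<odot> z = x \<odot> (x \<odot> z)"
  using moufang[of x \<one> z] by simp

lemma flexible: "x \<in> G \<Longrightarrow> y \<in> G \<Longrightarrow> (x \<odot> y) \<odot> x = x \<odot> (y \<odot> x)"
  using moufang[of x y \<one>] by simp

definition center :: "'a set" where
  "center = {c \<in> G. \<forall>x\<in>G. c \<odot> x = x \<odot> c \<and> (\<forall>y\<in>G. (c \<odot> x) \<odot> y = c \<odot> (x \<odot> y) \<and>
      (x \<odot> c) \<odot> y = x \<odot> (c \<odot> y) \<and> (x \<odot> y) \<odot> c = x \<odot> (y \<odot> c))}"

lemma centerI:
  assumes c: "c \<in> G" and commute: "\<And>x. x \<in> G \<Longrightarrow> c \<odot> x = x \<odot> c"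
    and left: "\<And>x y. x \<in> G \<Longrightarrow> y \<in> G \<Longrightarrow> (c \<odot> x) \<odot> y = c \<odot> (x \<odot> y)"
  shows "c \<in> center"
proof -
  have mid: "(x \<odot> c) \<odot> w = x \<odot> (c \<odot> w)" if x: "x \<in> G" and w: "w \<in> G" for x w
  proof -
    define z where "z = ldiv x w"
    have z: "z \<in> G" "x \<odot> z = w" using x w by (simp_all add: z_def)
    have "((x \<odot> c) \<odot> x) \<odot> z = x \<odot> (c \<odot> (x \<odot> z))" using moufang x c z by simp
    moreover have "((x \<odot> c) \<odot> x) \<odot> z = (x \<odot> c) \<odot> w"
    proof -
      have "((x \<odot> c) \<odot> x) \<odot> z = ((c \<odot> x) \<odot> x) \<odot> z" using commute x by simp
      also have "\<dots> = (c \<odot> (x \<odot> x)) \<odot> z" using left x by simp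
      also have "\<dots> = c \<odot> ((x \<odot> x) \<odot> z)" using left x z(1) by simp
      also have "\<dots> = c \<odot> (x \<odot> (x \<odot> z))" using left_alternative x z(1) by simp
      also have "\<dots> = (c \<odot> x) \<odot> (x \<odot> z)" using left[of x "x \<odot> z"] x z(1) by simp
      also have "\<dots> = (x \<odot> c) \<odot> w" using commute x z by simp
      finally show ?thesis .
    qed
    ultimately show ?thesis using z by simp
  qed
  have right: "(x \<odot> y) \<odot> c = x \<odot> (y \<odot> c)" if x: "x \<in> G" and y: "y \<in> G" for x y
  proof -
    have "(x \<odot> y) \<odot> c = c \<odot> (x \<odot> y)" using commute x y by simp
    also have "\<dots> = (c \<odot> x) \<odot> y" using left x y by simp
    also have "\<dots> = (x \<odot> c) \<odot> y" using commute x by simp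
    also have "\<dots> = x \<odot> (c \<odot> y)" using mid x y by simp
    also have "\<dots> = x \<odot> (y \<odot> c)" using commute y by simp
    finally show ?thesis .
  qed
  show ?thesis
    unfolding center_def using c commute left mid right by blast
qed

lemma center_closed [simp]: "c \<in> center \<Longrightarrow> c \<in> G"
  unfolding center_def by blast

lemma center_commute: "c \<in> center \<Longrightarrow> x \<in> G \<Longrightarrow> c \<odot> x = x \<odot> c"
  unfolding center_def by blast

lemma center_assoc_left: "c \<in> center \<Longrightarrow> x \<in> G \<Longrightarrow> y \<in> G \<Longrightarrow> (c \<odot> x) \<odot> y = c \<odot> (x \<odot> y)"
  unfolding center_def by blast

lemma center_assoc_mid: "c \<in> center \<Longrightarrow> x \<in> G \<Longrightarrow> y \<in> G \<Longrightarrow> (x \<odot> c) \<odot> y = x \<odot> (c \<odot> y)"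
  unfolding center_def by blast

lemma center_assoc_right: "c \<in> center \<Longrightarrow> x \<in> G \<Longrightarrow> y \<in> G \<Longrightarrow> (x \<odot> y) \<odot> c = x \<odot> (y \<odot> c)"
  unfolding center_def by blast

lemma one_in_center [simp]: "\<one> \<in> center"
  by (rule centerI) simp_all

lemma center_mult_closed [simp]:
  assumes c: "c \<in> center" and d: "d \<in> center"
  shows "c \<odot> d \<in> center"
proof (rule centerI)
  show "c \<odot> d \<in> G"
    using c d by simp
  fix x assume x: "x \<in> G"
  show "(c \<odot> d) \<odot> x = x \<odot> (c \<odot> d)"
    by (metis center_closed c d x center_commute center_assoc_left center_assoc_mid)
  fix y assume y: "y \<in> G"
  show "(c \<odot> d) \<odot> x \<odot> y = (c \<odot> d) \<odot> (x \<odot> y)"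
    by (metis center_closed c d x y mult_closed center_assoc_left)
qed

lemma center_if_trivial_comm_assoc:
  assumes c: "c \<in> G" and comm: "\<And>y. y \<in> G \<Longrightarrow> comm c y = \<one>"
    and assoc: "\<And>y z. y \<in> G \<Longrightarrow> z \<in> G \<Longrightarrow> assoc c y z = \<one>"
  shows "c \<in> center"
  using c comm assoc by (intro centerI) (simp_all add: comm_eq_one_iff assoc_eq_one_iff)

lemma sq_in_center [simp]: "x \<in> G \<Longrightarrow> sq x \<in> center"
  using E_identities[of x _ _ "\<one>" "\<one>"] by (intro center_if_trivial_comm_assoc) simp_all

lemma comm_in_center [simp]: "x \<in> G \<Longrightarrow> y \<in> G \<Longrightarrow> comm x y \<in> center"
  using E_identities[of x y _ _ "\<one>"] by (intro center_if_trivial_comm_assoc) simp_all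

lemma assoc_in_center [simp]: "x \<in> G \<Longrightarrow> y \<in> G \<Longrightarrow> z \<in> G \<Longrightarrow> assoc x y z \<in> center"
  using E_identities[of x y z] by (intro center_if_trivial_comm_assoc) simp_all

lemma center_mult_swap: "c \<in> center \<Longrightarrow> x \<in> G \<Longrightarrow> y \<in> G \<Longrightarrow> (x \<odot> c) \<odot> y = (x \<odot> y) \<odot> c"
  by (metis center_assoc_mid center_assoc_right center_commute)

lemma mult_center_assoc: "c \<in> center \<Longrightarrow> x \<in> G \<Longrightarrow> y \<in> G \<Longrightarrow> x \<odot> (y \<odot> c) = (x \<odot> y) \<odot> c"
  by (metis center_assoc_right)

lemma mult_center_center: "c \<in> center \<Longrightarrow> d \<in> center \<Longrightarrow> x \<in> G \<Longrightarrow> (x \<odot> c) \<odot> d = x \<odot> (c \<odot> d)"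
  by (metis center_assoc_right center_closed)

lemma center_commute_center: "c \<in> center \<Longrightarrow> d \<in> center \<Longrightarrow> c \<odot> d = d \<odot> c"
  by (metis center_commute center_closed)

lemma center_assoc_center:
  "c \<in> center \<Longrightarrow> d \<in> center \<Longrightarrow> f \<in> center \<Longrightarrow> (c \<odot> d) \<odot> f = c \<odot> (d \<odot> f)"
  by (metis center_assoc_left center_closed)

lemma center_left_commute:
  "c \<in> center \<Longrightarrow> d \<in> center \<Longrightarrow> f \<in> center \<Longrightarrow> c \<odot> (d \<odot> f) = d \<odot> (c \<odot> f)"
  by (metis center_commute_center center_assoc_center)

definition center_invol :: "'a set" where
  "center_invol = {c \<in> center. c \<odot> c = \<one>}"

lemma center_invol_center [simp]: "c \<in> center_invol \<Longrightarrow> c \<in> center"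
  unfolding center_invol_def by simp

lemma center_invol_closed [simp]: "c \<in> center_invol \<Longrightarrow> c \<in> G"
  unfolding center_invol_def by simp

lemma center_invol_square [simp]: "c \<in> center_invol \<Longrightarrow> c \<odot> c = \<one>"
  unfolding center_invol_def by simp

lemma one_in_center_invol [simp]: "\<one> \<in> center_invol"
  unfolding center_invol_def by simp

lemma center_invol_cancel_left: "c \<in> center_invol \<Longrightarrow> d \<in> center \<Longrightarrow> c \<odot> (c \<odot> d) = d"
  by (metis center_assoc_center center_invol_center center_invol_square one_mult center_closed)

lemma center_invol_mult_closed [simp]:
  "c \<in> center_invol \<Longrightarrow> d \<in> center_invol \<Longrightarrow> c \<odot> d \<in> center_invol"
  unfolding center_invol_def
  by (simp, metis center_commute_center center_assoc_center center_left_commute center_closed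
      mult_one center_mult_closed)

lemma sq_in_center_invol [simp]: "x \<in> G \<Longrightarrow> sq x \<in> center_invol"
  unfolding center_invol_def using E_identities[of x \<one> \<one> \<one> \<one>] by simp

lemma comm_in_center_invol [simp]: "x \<in> G \<Longrightarrow> y \<in> G \<Longrightarrow> comm x y \<in> center_invol"
  unfolding center_invol_def using E_identities[of x y \<one> \<one> \<one>] by (simp add: lsq_def)

lemma assoc_in_center_invol [simp]: "x \<in> G \<Longrightarrow> y \<in> G \<Longrightarrow> z \<in> G \<Longrightarrow> assoc x y z \<in> center_invol"
  unfolding center_invol_def using E_identities[of x y z \<one> \<one>] by (simp add: lsq_def)

lemma center_invol_eq_if_mult_one:
  "c \<in> center_invol \<Longrightarrow> d \<in> center_invol \<Longrightarrow> c \<odot> d = \<one> \<Longrightarrow> c = d"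
  by (metis center_assoc_center center_invol_center center_invol_square one_mult center_closed mult_one)

lemmas center_ac =
  center_commute_center center_assoc_center center_left_commute center_invol_cancel_left

section \<open>The associator of a loop in \<open>E\<close>\<close>

lemma assoc_cocycle:
  assumes x: "x \<in> G" and y: "y \<in> G" and z: "z \<in> G" and w: "w \<in> G"
  shows "assoc (x \<odot> y) z w \<odot> assoc x y (z \<odot> w) = assoc x y z \<odot> (assoc x (y \<odot> z) w \<odot> assoc y z w)"
proof -
  let ?P = "x \<odot> (y \<odot> (z \<odot> w))"
  \<comment> \<open>Reassociate \<open>((x \<odot> y) \<odot> z) \<odot> w\<close> into \<open>?P\<close> along the two paths of the pentagon.\<close>
  have "((x \<odot> y) \<odot> z) \<odot> w = ((x \<odot> (y \<odot> z)) \<odot> w) \<odot> assoc x y z"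
    using assoc_eq[of x y z] center_mult_swap[of "assoc x y z" "x \<odot> (y \<odot> z)" w] x y z w by simp
  also have "\<dots> = (x \<odot> ((y \<odot> z) \<odot> w)) \<odot> (assoc x (y \<odot> z) w \<odot> assoc x y z)"
    using assoc_eq[of x "y \<odot> z" w] x y z w by (simp add: mult_center_center)
  also have "\<dots> = ?P \<odot> (assoc y z w \<odot> (assoc x (y \<odot> z) w \<odot> assoc x y z))"
    using assoc_eq[of y z w] mult_center_assoc[of "assoc y z w" x "y \<odot> (z \<odot> w)"] x y z w
    by (simp add: mult_center_center)
  finally have 1: "((x \<odot> y) \<odot> z) \<odot> w = ?P \<odot> (assoc y z w \<odot> (assoc x (y \<odot> z) w \<odot> assoc x y z))" .
  have "((x \<odot> y) \<odot> z) \<odot> w = (?P \<odot> assoc x y (z \<odot> w)) \<odot> assoc (x \<odot> y) z w"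
    using assoc_eq[of "x \<odot> y" z w] assoc_eq[of x y "z \<odot> w"] x y z w by simp
  also have "\<dots> = ?P \<odot> (assoc x y (z \<odot> w) \<odot> assoc (x \<odot> y) z w)"
    using x y z w by (simp add: mult_center_center)
  finally have "?P \<odot> (assoc x y (z \<odot> w) \<odot> assoc (x \<odot> y) z w) =
      ?P \<odot> (assoc y z w \<odot> (assoc x (y \<odot> z) w \<odot> assoc x y z))"
    using 1 by (rule trans[OF sym])
  then have "assoc x y (z \<odot> w) \<odot> assoc (x \<odot> y) z w = assoc y z w \<odot> (assoc x (y \<odot> z) w \<odot> assoc x y z)"
    by (rule left_cancel[rotated 3]) (use x y z w in simp_all)
  then show ?thesis
    using x y z w by (simp add: center_ac)
qed

lemma assoc_flexible [simp]: "x \<in> G \<Longrightarrow> y \<in> G \<Longrightarrow> assoc x y x = \<one>"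
  using flexible assoc_eq_one_iff by simp

lemma assoc_left_alternative [simp]: "x \<in> G \<Longrightarrow> y \<in> G \<Longrightarrow> assoc x x y = \<one>"
  using left_alternative assoc_eq_one_iff by simp

lemma assoc_moufang:
  assumes x: "x \<in> G" and y: "y \<in> G" and z: "z \<in> G"
  shows "assoc (x \<odot> y) x z = assoc x y (x \<odot> z)"
proof -
  let ?P = "x \<odot> (y \<odot> (x \<odot> z))"
  have "((x \<odot> y) \<odot> x) \<odot> z = (?P \<odot> assoc x y (x \<odot> z)) \<odot> assoc (x \<odot> y) x z"
    using assoc_eq[of "x \<odot> y" x z] assoc_eq[of x y "x \<odot> z"] x y z by simp
  also have "\<dots> = ?P \<odot> (assoc x y (x \<odot> z) \<odot> assoc (x \<odot> y) x z)"
    using x y z by (simp add: mult_center_center)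
  finally have "?P \<odot> (assoc x y (x \<odot> z) \<odot> assoc (x \<odot> y) x z) = ?P \<odot> \<one>"
    using moufang[of x y z] x y z by simp
  then have "assoc x y (x \<odot> z) \<odot> assoc (x \<odot> y) x z = \<one>"
    by (rule left_cancel[rotated 3]) (use x y z in simp_all)
  then show ?thesis
    using center_invol_eq_if_mult_one x y z by (metis assoc_in_center_invol mult_closed)
qed

lemma assoc_mult_center_1:
  assumes c: "c \<in> center" and x: "x \<in> G" and y: "y \<in> G" and z: "z \<in> G"
  shows "assoc (x \<odot> c) y z = assoc x y z"
proof (rule assoc_unique)
  let ?a = "assoc x y z"
  have "((x \<odot> c) \<odot> y) \<odot> z = ((x \<odot> y) \<odot> z) \<odot> c"
    using center_mult_swap[OF c x y] center_mult_swap[OF c _ z, of "x \<odot> y"] x y by simp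
  also have "\<dots> = ((x \<odot> (y \<odot> z)) \<odot> c) \<odot> ?a"
    using assoc_eq[OF x y z] center_mult_swap[OF c _ _, of "x \<odot> (y \<odot> z)" ?a] x y z by simp
  also have "\<dots> = ((x \<odot> c) \<odot> (y \<odot> z)) \<odot> ?a"
    using center_mult_swap[OF c x, of "y \<odot> z"] y z by simp
  finally show "((x \<odot> c) \<odot> y) \<odot> z = ((x \<odot> c) \<odot> (y \<odot> z)) \<odot> ?a" .
qed (use c x y z in simp_all)

lemma assoc_mult_center_2:
  assumes c: "c \<in> center" and x: "x \<in> G" and y: "y \<in> G" and z: "z \<in> G"
  shows "assoc x (y \<odot> c) z = assoc x y z"
proof (rule assoc_unique)
  let ?a = "assoc x y z"
  have "(x \<odot> (y \<odot> c)) \<odot> z = ((x \<odot> y) \<odot> z) \<odot> c"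
    using mult_center_assoc[OF c x y] center_mult_swap[OF c _ z, of "x \<odot> y"] x y by simp
  also have "\<dots> = ((x \<odot> (y \<odot> z)) \<odot> c) \<odot> ?a"
    using assoc_eq[OF x y z] center_mult_swap[OF c _ _, of "x \<odot> (y \<odot> z)" ?a] x y z by simp
  also have "\<dots> = (x \<odot> ((y \<odot> c) \<odot> z)) \<odot> ?a"
    using center_mult_swap[OF c y z] mult_center_assoc[OF c x, of "y \<odot> z"] y z by simp
  finally show "(x \<odot> (y \<odot> c)) \<odot> z = (x \<odot> ((y \<odot> c) \<odot> z)) \<odot> ?a" .
qed (use c x y z in simp_all)

lemma assoc_mult_center_3:
  assumes c: "c \<in> center" and x: "x \<in> G" and y: "y \<in> G" and z: "z \<in> G"
  shows "assoc x y (z \<odot> c) = assoc x y z"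
proof (rule assoc_unique)
  let ?a = "assoc x y z"
  have "(x \<odot> y) \<odot> (z \<odot> c) = ((x \<odot> y) \<odot> z) \<odot> c"
    using mult_center_assoc[OF c _ z, of "x \<odot> y"] x y by simp
  also have "\<dots> = ((x \<odot> (y \<odot> z)) \<odot> c) \<odot> ?a"
    using assoc_eq[OF x y z] center_mult_swap[OF c _ _, of "x \<odot> (y \<odot> z)" ?a] x y z by simp
  also have "\<dots> = (x \<odot> (y \<odot> (z \<odot> c))) \<odot> ?a"
    using mult_center_assoc[OF c y z] mult_center_assoc[OF c x, of "y \<odot> z"] y z by simp
  finally show "(x \<odot> y) \<odot> (z \<odot> c) = (x \<odot> (y \<odot> (z \<odot> c))) \<odot> ?a" .
qed (use c x y z in simp_all)

lemma assoc_center_1: "c \<in> center \<Longrightarrow> y \<in> G \<Longrightarrow> z \<in> G \<Longrightarrow> assoc c y z = \<one>"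
  using assoc_mult_center_1[of c \<one> y z] by simp

lemma assoc_center_3: "c \<in> center \<Longrightarrow> x \<in> G \<Longrightarrow> y \<in> G \<Longrightarrow> assoc x y c = \<one>"
  using assoc_mult_center_3[of c x y \<one>] by simp

lemma assoc_swap_2:
  "x \<in> G \<Longrightarrow> y \<in> G \<Longrightarrow> z \<in> G \<Longrightarrow> w \<in> G \<Longrightarrow> assoc z (y \<odot> x) w = assoc z (x \<odot> y) w"
  using comm_eq[of y x] assoc_mult_center_2[of "comm y x" z "x \<odot> y" w] by simp

lemma assoc_swap_3:
  "x \<in> G \<Longrightarrow> y \<in> G \<Longrightarrow> z \<in> G \<Longrightarrow> w \<in> G \<Longrightarrow> assoc z w (y \<odot> x) = assoc z w (x \<odot> y)"
  using comm_eq[of y x] assoc_mult_center_3[of "comm y x" z w "x \<odot> y"] by simp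

lemma assoc_right_alternative [simp]:
  assumes x: "x \<in> G" and y: "y \<in> G"
  shows "assoc y x x = \<one>"
proof -
  have "assoc (x \<odot> y) x x \<odot> assoc x y (x \<odot> x) = assoc x y x \<odot> (assoc x (y \<odot> x) x \<odot> assoc y x x)"
    using assoc_cocycle[of x y x x] x y by simp
  moreover have "assoc x y (x \<odot> x) = \<one>"
    using assoc_center_3[of "sq x" x y] x y by (simp add: sq_eq[symmetric])
  moreover have "assoc (x \<odot> y) x x = \<one>"
    using assoc_moufang[of x y x] calculation(2) x y by simp
  ultimately show ?thesis
    using x y by simp
qed

lemma assoc_absorb_12:
  assumes x: "x \<in> G" and y: "y \<in> G" and z: "z \<in> G"
  shows "assoc x (x \<odot> y) z = assoc x y z"
proof -
  have "assoc (x \<odot> x) y z \<odot> assoc x x (y \<odot> z) = assoc x x y \<odot> (assoc x (x \<odot> y) z \<odot> assoc x y z)"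
    using assoc_cocycle[of x x y z] x y z by simp
  moreover have "assoc (x \<odot> x) y z = \<one>"
    using assoc_center_1[of "sq x" y z] x y z by (simp add: sq_eq[symmetric])
  ultimately have "assoc x (x \<odot> y) z \<odot> assoc x y z = \<one>"
    using x y z by simp
  then show ?thesis
    using center_invol_eq_if_mult_one x y z by (metis assoc_in_center_invol mult_closed)
qed

lemma assoc_sym12:
  assumes x: "x \<in> G" and y: "y \<in> G" and z: "z \<in> G"
  shows "assoc y x z = assoc x y z"
proof -
  have "assoc (x \<odot> y) x z \<odot> assoc x y (x \<odot> z) = assoc x y x \<odot> (assoc x (y \<odot> x) z \<odot> assoc y x z)"
    using assoc_cocycle[of x y x z] x y z by simp
  moreover have "assoc (x \<odot> y) x z \<odot> assoc x y (x \<odot> z) = \<one>"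
    using assoc_moufang[of x y z] x y z by simp
  moreover have "assoc x (y \<odot> x) z = assoc x y z"
    using assoc_swap_2[of x y x z] assoc_absorb_12[of x y z] x y z by simp
  ultimately have "assoc x y z \<odot> assoc y x z = \<one>"
    using x y z by simp
  then show ?thesis
    using center_invol_eq_if_mult_one x y z by (metis assoc_in_center_invol)
qed

lemma assoc_absorb_32:
  assumes x: "x \<in> G" and y: "y \<in> G" and z: "z \<in> G"
  shows "assoc x (y \<odot> z) z = assoc x y z"
proof -
  have "assoc (x \<odot> y) z z \<odot> assoc x y (z \<odot> z) = assoc x y z \<odot> (assoc x (y \<odot> z) z \<odot> assoc y z z)"
    using assoc_cocycle[of x y z z] x y z by simp
  moreover have "assoc x y (z \<odot> z) = \<one>"
    using assoc_center_3[of "sq z" x y] x y z by (simp add: sq_eq[symmetric])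
  ultimately have "assoc x y z \<odot> assoc x (y \<odot> z) z = \<one>"
    using x y z by simp
  then show ?thesis
    using center_invol_eq_if_mult_one x y z by (metis assoc_in_center_invol mult_closed)
qed

lemma assoc_absorb_23:
  assumes x: "x \<in> G" and y: "y \<in> G" and z: "z \<in> G"
  shows "assoc x y (y \<odot> z) = assoc x y z"
proof -
  have "assoc (y \<odot> x) y z \<odot> assoc y x (y \<odot> z) = assoc y x y \<odot> (assoc y (x \<odot> y) z \<odot> assoc x y z)"
    using assoc_cocycle[of y x y z] x y z by simp
  moreover have "assoc (y \<odot> x) y z = assoc x y z"
    using assoc_sym12[of y "y \<odot> x" z] assoc_absorb_12[of y x z] assoc_sym12[of x y z] x y z by simp
  moreover have "assoc y (x \<odot> y) z = assoc x y z"
    using assoc_swap_2[of x y y z] assoc_absorb_12[of y x z] assoc_sym12[of x y z] x y z by simp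
  ultimately have "assoc y x (y \<odot> z) = assoc x y z"
    using x y z
    by (simp add: center_ac) (metis assoc_in_center_invol mult_closed center_invol_eq_if_mult_one)
  then show ?thesis
    using assoc_sym12[of x y "y \<odot> z"] x y z by simp
qed

lemma assoc_absorb_31:
  assumes x: "x \<in> G" and y: "y \<in> G" and z: "z \<in> G"
  shows "assoc (x \<odot> z) y z = assoc x y z"
proof -
  have "assoc (y \<odot> x) z z \<odot> assoc y x (z \<odot> z) = assoc y x z \<odot> (assoc y (x \<odot> z) z \<odot> assoc x z z)"
    using assoc_cocycle[of y x z z] x y z by simp
  moreover have "assoc y x (z \<odot> z) = \<one>"
    using assoc_center_3[of "sq z" y x] x y z by (simp add: sq_eq[symmetric])
  ultimately have "assoc y (x \<odot> z) z = assoc y x z"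
    using x y z
    by (simp add: center_ac) (metis assoc_in_center_invol mult_closed center_invol_eq_if_mult_one)
  then show ?thesis
    using assoc_sym12[of y "x \<odot> z" z] assoc_sym12[of y x z] x y z by simp
qed

lemma assoc_sym23:
  assumes x: "x \<in> G" and y: "y \<in> G" and z: "z \<in> G"
  shows "assoc x z y = assoc x y z"
proof -
  have "y \<odot> (y \<odot> z) = z \<odot> sq y"
    using left_alternative[of y z] x y z center_commute[of "sq y" z] by (simp add: sq_eq[symmetric])
  then have "assoc x (y \<odot> (y \<odot> z)) (y \<odot> z) = assoc x z (y \<odot> z)"
    using assoc_mult_center_2[of "sq y" x z "y \<odot> z"] x y z by simp
  moreover have "assoc (x \<odot> y) (y \<odot> z) (y \<odot> z) \<odot> assoc x y ((y \<odot> z) \<odot> (y \<odot> z)) =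
      assoc x y (y \<odot> z) \<odot> (assoc x (y \<odot> (y \<odot> z)) (y \<odot> z) \<odot> assoc y (y \<odot> z) (y \<odot> z))"
    using assoc_cocycle[of x y "y \<odot> z" "y \<odot> z"] x y z by simp
  moreover have "assoc x y ((y \<odot> z) \<odot> (y \<odot> z)) = \<one>"
    using assoc_center_3[of "sq (y \<odot> z)" x y] x y z by (simp add: sq_eq[symmetric])
  ultimately have "assoc x z (y \<odot> z) = assoc x y (y \<odot> z)"
    using x y z
    by (simp add: center_ac) (metis assoc_in_center_invol mult_closed center_invol_eq_if_mult_one)
  moreover have "assoc (x \<odot> z) y z \<odot> assoc x z (y \<odot> z) = assoc x z y \<odot> (assoc x (z \<odot> y) z \<odot> assoc z y z)"
    using assoc_cocycle[of x z y z] x y z by simp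
  moreover have "assoc x (z \<odot> y) z = assoc x y z"
    using assoc_swap_2[of y z x z] assoc_absorb_32[of x y z] x y z by simp
  ultimately have "assoc x z y \<odot> assoc x y z = \<one>"
    using assoc_absorb_31[OF x y z] assoc_absorb_23[OF x y z] x y z by (simp add: center_ac)
  then show ?thesis
    using center_invol_eq_if_mult_one x y z by (metis assoc_in_center_invol)
qed

text \<open>Symmetry and the cocycle identity make the associator trilinear.\<close>

lemma assoc_mult_1:
  assumes x: "x \<in> G" and y: "y \<in> G" and z: "z \<in> G" and w: "w \<in> G"
  shows "assoc (x \<odot> y) z w = assoc x z w \<odot> assoc y z w"
proof -
  have "assoc (x \<odot> y) z w \<odot> assoc x y (z \<odot> w) = assoc x y z \<odot> (assoc x (y \<odot> z) w \<odot> assoc y z w)"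
    using assoc_cocycle[of x y z w] x y z w by simp
  moreover have "assoc (x \<odot> z) y w \<odot> assoc x z (y \<odot> w) = assoc x z y \<odot> (assoc x (z \<odot> y) w \<odot> assoc z y w)"
    using assoc_cocycle[of x z y w] x y z w by simp
  moreover have "assoc (x \<odot> z) w y \<odot> assoc x z (w \<odot> y) = assoc x z w \<odot> (assoc x (z \<odot> w) y \<odot> assoc z w y)"
    using assoc_cocycle[of x z w y] x y z w by simp
  moreover have "assoc (x \<odot> z) w y = assoc (x \<odot> z) y w" "assoc x z (w \<odot> y) = assoc x z (y \<odot> w)"
    "assoc x z y = assoc x y z" "assoc x (z \<odot> y) w = assoc x (y \<odot> z) w" "assoc z y w = assoc y z w"
    "assoc z w y = assoc y z w" "assoc x (z \<odot> w) y = assoc x y (z \<odot> w)"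
    using assoc_sym23[of "x \<odot> z" y w] assoc_swap_3[of y w x z] assoc_sym23[of x y z]
      assoc_swap_2[of y z x w] assoc_sym12[of y z w] assoc_sym23[of z y w] assoc_sym23[of x y "z \<odot> w"]
      x y z w
    by simp_all
  ultimately have "assoc (x \<odot> y) z w \<odot> assoc x y (z \<odot> w) = assoc x z w \<odot> (assoc x y (z \<odot> w) \<odot> assoc y z w)"
    by simp
  then have "(assoc (x \<odot> y) z w \<odot> assoc x y (z \<odot> w)) \<odot> assoc x y (z \<odot> w) =
      (assoc x z w \<odot> (assoc x y (z \<odot> w) \<odot> assoc y z w)) \<odot> assoc x y (z \<odot> w)"
    by simp
  then show ?thesis
    using x y z w by (simp add: center_ac)
qed

lemma assoc_mult_2:
  assumes x: "x \<in> G" and y: "y \<in> G" and z: "z \<in> G" and w: "w \<in> G"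
  shows "assoc z (x \<odot> y) w = assoc z x w \<odot> assoc z y w"
  using assoc_mult_1[of x y z w] assoc_sym12[of z "x \<odot> y" w] assoc_sym12[of z x w]
    assoc_sym12[of z y w] x y z w
  by simp

lemma assoc_mult_3:
  assumes x: "x \<in> G" and y: "y \<in> G" and z: "z \<in> G" and w: "w \<in> G"
  shows "assoc z w (x \<odot> y) = assoc z w x \<odot> assoc z w y"
  using assoc_mult_2[of x y z w] assoc_sym23[of z w "x \<odot> y"] assoc_sym23[of z w x]
    assoc_sym23[of z w y] x y z w
  by simp

lemma center_invol_move: "u = v \<odot> c \<Longrightarrow> c \<in> center_invol \<Longrightarrow> v \<in> G \<Longrightarrow> v = u \<odot> c"
  by (simp add: mult_center_center)

lemma comm_sym:
  assumes x: "x \<in> G" and y: "y \<in> G"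
  shows "comm y x = comm x y"
proof -
  have 1: "x \<odot> y = (y \<odot> x) \<odot> comm x y" using comm_eq[of x y] x y by blast
  have 2: "y \<odot> x = (x \<odot> y) \<odot> comm y x" using comm_eq[of y x] x y by blast
  have "x \<odot> y = ((x \<odot> y) \<odot> comm y x) \<odot> comm x y"
    by (subst 2[symmetric]) (rule 1)
  also have "\<dots> = (x \<odot> y) \<odot> (comm y x \<odot> comm x y)"
    using mult_center_center[of "comm y x" "comm x y" "x \<odot> y"] x y by simp
  finally have "(x \<odot> y) \<odot> \<one> = (x \<odot> y) \<odot> (comm y x \<odot> comm x y)"
    using x y by simp
  then have "\<one> = comm y x \<odot> comm x y"
    by (rule left_cancel[rotated 3]) (use x y in simp_all)
  then show ?thesis using center_invol_eq_if_mult_one x y by (metis comm_in_center_invol)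
qed

lemma comm_mult_left:
  assumes a: "a \<in> G" and b: "b \<in> G" and c: "c \<in> G"
  shows "comm (a \<odot> b) c = comm a c \<odot> (comm b c \<odot> assoc a b c)"
proof -
  let ?P = "c \<odot> (a \<odot> b)"
  have s1: "(a \<odot> b) \<odot> c = (a \<odot> (b \<odot> c)) \<odot> assoc a b c"
    using assoc_eq[of a b c] a b c by simp
  have s2: "b \<odot> c = (c \<odot> b) \<odot> comm b c" using comm_eq[of b c] b c by simp
  have s3: "a \<odot> (c \<odot> b) = ((a \<odot> c) \<odot> b) \<odot> assoc a c b"
    using center_invol_move[OF assoc_eq[of a c b]] a b c by simp
  have s4: "a \<odot> c = (c \<odot> a) \<odot> comm a c" using comm_eq[of a c] a c by simp
  have s5: "(c \<odot> a) \<odot> b = ?P \<odot> assoc c a b" using assoc_eq[of c a b] a b c by simp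
  have "(a \<odot> b) \<odot> c = ((a \<odot> ((c \<odot> b) \<odot> comm b c)) \<odot> assoc a b c)"
    using s1 s2 by simp
  also have "\<dots> = ((a \<odot> (c \<odot> b)) \<odot> comm b c) \<odot> assoc a b c"
    using mult_center_assoc[of "comm b c" a "c \<odot> b"] a b c by simp
  also have "\<dots> = ((((c \<odot> a) \<odot> comm a c) \<odot> b) \<odot> assoc a c b \<odot> comm b c) \<odot> assoc a b c"
    using s3 s4 by simp
  also have "\<dots> = ((((c \<odot> a) \<odot> b) \<odot> comm a c) \<odot> assoc a c b \<odot> comm b c) \<odot> assoc a b c"
    using center_mult_swap[of "comm a c" "c \<odot> a" b] a b c by simp
  also have "\<dots> = (((?P \<odot> assoc c a b) \<odot> comm a c) \<odot> assoc a c b \<odot> comm b c) \<odot> assoc a b c"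
    using s5 by simp
  also have "\<dots> = ?P \<odot> (assoc c a b \<odot> (comm a c \<odot> (assoc a c b \<odot> (comm b c \<odot> assoc a b c))))"
    using a b c by (simp add: mult_center_center)
  finally have 1:
    "(a \<odot> b) \<odot> c = ?P \<odot> (assoc c a b \<odot> (comm a c \<odot> (assoc a c b \<odot> (comm b c \<odot> assoc a b c))))" .
  have 2: "(a \<odot> b) \<odot> c = ?P \<odot> comm (a \<odot> b) c"
    using comm_eq[of "a \<odot> b" c] a b c by simp
  have "comm (a \<odot> b) c = assoc c a b \<odot> (comm a c \<odot> (assoc a c b \<odot> (comm b c \<odot> assoc a b c)))"
    by (rule left_cancel[of ?P]) (use 1 2 a b c in simp_all)
  also have "\<dots> = comm a c \<odot> (comm b c \<odot> assoc a b c)"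
    using assoc_sym12[of a c b] assoc_sym23[of a b c] a b c by (simp add: center_ac)
  finally show ?thesis .
qed

end

section \<open>Central words\<close>

primrec lprod :: "'a loop \<Rightarrow> nat \<Rightarrow> (nat \<Rightarrow> 'a) \<Rightarrow> 'a" where
  "lprod L 0 g = lone L"
| "lprod L (Suc m) g = lmult L (g m) (lprod L m g)"

definition bpow :: "'a loop \<Rightarrow> bool \<Rightarrow> 'a \<Rightarrow> 'a" where
  "bpow L b d = (if b then d else lone L)"

lemma lprod_cong: "(\<And>i. i < m \<Longrightarrow> g i = h i) \<Longrightarrow> lprod L m g = lprod L m h"
  by (induction m) auto

context loop
begin

lemma lprod_closed: "(\<And>i. i < m \<Longrightarrow> g i \<in> G) \<Longrightarrow> lprod L m g \<in> G"
  by (induction m) auto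

lemma lprod_eq_one: "(\<And>i. i < m \<Longrightarrow> g i = \<one>) \<Longrightarrow> lprod L m g = \<one>"
  by (induction m) auto

lemma lprod_const_one [simp]: "lprod L m (\<lambda>_. \<one>) = \<one>"
  by (rule lprod_eq_one) simp

lemma lprod_single:
  "i < m \<Longrightarrow> (\<And>j. j < m \<Longrightarrow> j \<noteq> i \<Longrightarrow> g j = \<one>) \<Longrightarrow> g i \<in> G \<Longrightarrow> lprod L m g = g i"
proof (induction m)
  case (Suc m)
  show ?case
  proof (cases "i = m")
    case True
    then have "lprod L m g = \<one>"
      using Suc.prems by (intro lprod_eq_one) auto
    then show ?thesis
      using True Suc.prems by simp
  next
    case False
    then show ?thesis
      using Suc by simp
  qed
qed simp

lemma lprod2_eq_one:
  "(\<And>i j. i < j \<Longrightarrow> j < n \<Longrightarrow> g i j = \<one>) \<Longrightarrow> lprod L n (\<lambda>j. lprod L j (\<lambda>i. g i j)) = \<one>"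
  by (rule lprod_eq_one) (rule lprod_eq_one, simp)

lemma lprod3_eq_one:
  "(\<And>i j k. i < j \<Longrightarrow> j < k \<Longrightarrow> k < n \<Longrightarrow> g i j k = \<one>) \<Longrightarrow>
    lprod L n (\<lambda>k. lprod L k (\<lambda>j. lprod L j (\<lambda>i. g i j k))) = \<one>"
  by (rule lprod_eq_one) (rule lprod_eq_one, rule lprod_eq_one, simp)

lemma lprod2_single:
  assumes ij: "i0 < j0" "j0 < n"
    and g: "\<And>i j. i < j \<Longrightarrow> j < n \<Longrightarrow> (i, j) \<noteq> (i0, j0) \<Longrightarrow> g i j = \<one>"
    and g0: "g i0 j0 \<in> G"
  shows "lprod L n (\<lambda>j. lprod L j (\<lambda>i. g i j)) = g i0 j0"
proof -
  have "lprod L j (\<lambda>i. g i j) = (if j = j0 then g i0 j0 else \<one>)" if "j < n" for j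
    using ij g0 g that by (auto intro!: lprod_eq_one lprod_single)
  then have "lprod L n (\<lambda>j. lprod L j (\<lambda>i. g i j)) = lprod L n (\<lambda>j. if j = j0 then g i0 j0 else \<one>)"
    by (rule lprod_cong)
  also have "\<dots> = g i0 j0"
    using ij g0 by (subst lprod_single[of j0]) auto
  finally show ?thesis .
qed

lemma lprod3_single:
  assumes ijk: "i0 < j0" "j0 < k0" "k0 < n"
    and g: "\<And>i j k. i < j \<Longrightarrow> j < k \<Longrightarrow> k < n \<Longrightarrow> (i, j, k) \<noteq> (i0, j0, k0) \<Longrightarrow> g i j k = \<one>"
    and g0: "g i0 j0 k0 \<in> G"
  shows "lprod L n (\<lambda>k. lprod L k (\<lambda>j. lprod L j (\<lambda>i. g i j k))) = g i0 j0 k0"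
proof -
  have "lprod L k (\<lambda>j. lprod L j (\<lambda>i. g i j k)) = (if k = k0 then g i0 j0 k0 else \<one>)"
    if "k < n" for k
    using ijk g0 g that by (auto intro!: lprod2_eq_one lprod2_single)
  then have "lprod L n (\<lambda>k. lprod L k (\<lambda>j. lprod L j (\<lambda>i. g i j k))) =
      lprod L n (\<lambda>k. if k = k0 then g i0 j0 k0 else \<one>)"
    by (rule lprod_cong)
  also have "\<dots> = g i0 j0 k0"
    using ijk g0 by (subst lprod_single[of k0]) auto
  finally show ?thesis .
qed

lemma bpow_closed [simp]: "d \<in> G \<Longrightarrow> bpow L b d \<in> G"
  by (simp add: bpow_def)

lemma bpow_False [simp]: "bpow L False d = \<one>"
  by (simp add: bpow_def)

lemma bpow_True [simp]: "bpow L True d = d"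
  by (simp add: bpow_def)

lemma bpow_one [simp]: "bpow L b \<one> = \<one>"
  by (simp add: bpow_def)

end

context E_loop
begin

lemma lprod_in_center_invol:
  "(\<And>i. i < m \<Longrightarrow> g i \<in> center_invol) \<Longrightarrow> lprod L m g \<in> center_invol"
  by (induction m) auto

lemma lprod_mult:
  assumes "\<And>i. i < m \<Longrightarrow> g i \<in> center_invol" and "\<And>i. i < m \<Longrightarrow> h i \<in> center_invol"
  shows "lprod L m g \<odot> lprod L m h = lprod L m (\<lambda>i. g i \<odot> h i)"
  using assms
proof (induction m)
  case (Suc m)
  have "g m \<in> center_invol" "h m \<in> center_invol"
    "lprod L m g \<in> center_invol" "lprod L m h \<in> center_invol"
    using Suc.prems by (auto intro: lprod_in_center_invol)
  then have "lprod L (Suc m) g \<odot> lprod L (Suc m) h = (g m \<odot> h m) \<odot> (lprod L m g \<odot> lprod L m h)"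
    by (simp add: center_ac)
  then show ?case
    using Suc by simp
qed simp

lemma bpow_in_center_invol [simp]: "d \<in> center_invol \<Longrightarrow> bpow L b d \<in> center_invol"
  by (simp add: bpow_def)

lemma bpow_mult: "d \<in> center_invol \<Longrightarrow> bpow L b d \<odot> bpow L b' d = bpow L (b \<noteq> b') d"
  by (simp add: bpow_def)

end

text \<open>The coefficients \<open>(P, C, A)\<close> select the squares \<open>sq (x i)\<close>, the commutators
  \<open>comm (x i) (x j)\<close> with \<open>i < j\<close> and the associators \<open>assoc (x i) (x j) (x k)\<close> with \<open>i < j < k\<close>
  that occur in the central word; the nested products enumerate exactly these index tuples.\<close>

type_synonym coeffs = "(nat \<Rightarrow> bool) \<times> (nat \<Rightarrow> nat \<Rightarrow> bool) \<times> (nat \<Rightarrow> nat \<Rightarrow> nat \<Rightarrow> bool)"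

definition central_word :: "'a loop \<Rightarrow> (nat \<Rightarrow> 'a) \<Rightarrow> nat \<Rightarrow> coeffs \<Rightarrow> 'a" where
  "central_word L x n c = (case c of (P, C, A) \<Rightarrow>
     lmult L (lprod L n (\<lambda>i. bpow L (P i) (lsq L (x i))))
      (lmult L (lprod L n (\<lambda>j. lprod L j (\<lambda>i. bpow L (C i j) (lcomm L (x i) (x j)))))
        (lprod L n (\<lambda>k. lprod L k (\<lambda>j. lprod L j (\<lambda>i. bpow L (A i j k) (lassoc L (x i) (x j) (x k))))))))"

definition coeffs_xor :: "coeffs \<Rightarrow> coeffs \<Rightarrow> coeffs" where
  "coeffs_xor c d = (case c of (P, C, A) \<Rightarrow> case d of (P', C', A') \<Rightarrow>
     (\<lambda>i. P i \<noteq> P' i, \<lambda>i j. C i j \<noteq> C' i j, \<lambda>i j k. A i j k \<noteq> A' i j k))"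

primrec ordered_word :: "'a loop \<Rightarrow> (nat \<Rightarrow> 'a) \<Rightarrow> nat \<Rightarrow> (nat \<Rightarrow> bool) \<Rightarrow> 'a" where
  "ordered_word L x 0 a = lone L"
| "ordered_word L x (Suc m) a =
    (if a m then lmult L (x m) (ordered_word L x m a) else ordered_word L x m a)"

lemma ordered_word_trivial: "(\<And>i. i < m \<Longrightarrow> \<not> a i) \<Longrightarrow> ordered_word L x m a = lone L"
  by (induction m) auto

context loop
begin

lemma ordered_word_carrier: "(\<And>i. i < m \<Longrightarrow> x i \<in> G) \<Longrightarrow> ordered_word L x m a \<in> G"
  by (induction m) auto

end

locale E_gen = E_loop +
  fixes n :: nat and x :: "nat \<Rightarrow> 'a"
  assumes gens_closed: "\<And>i. i < n \<Longrightarrow> x i \<in> G"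
begin

abbreviation S where "S \<equiv> lgen L (x ` {..<n})"
abbreviation cword where "cword \<equiv> central_word L x n"

definition central_words :: "'a set" where
  "central_words = range cword"

lemma S_closed: "w \<in> S \<Longrightarrow> w \<in> G"
  by (rule lgen_closed)

lemma gen_in_S: "i < n \<Longrightarrow> x i \<in> S"
  using gens_closed by (intro lgen.gen_base) auto

lemma cword_in_center_invol [simp]: "cword c \<in> center_invol"
  using gens_closed
  by (auto simp: central_word_def split: prod.split
      intro!: center_invol_mult_closed lprod_in_center_invol)

lemma central_words_center_invol [simp]: "z \<in> central_words \<Longrightarrow> z \<in> center_invol"
  unfolding central_words_def by auto

lemma central_words_closed [simp]: "z \<in> central_words \<Longrightarrow> z \<in> G"
  by simp

lemma cword_mult: "cword c \<odot> cword d = cword (coeffs_xor c d)"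
proof -
  obtain P C A P' C' A' where c: "c = (P, C, A)" and d: "d = (P', C', A')"
    by (cases c, cases d) auto
  let ?p = "\<lambda>P. lprod L n (\<lambda>i. bpow L (P i) (sq (x i)))"
  let ?c = "\<lambda>C. lprod L n (\<lambda>j. lprod L j (\<lambda>i. bpow L (C i j) (comm (x i) (x j))))"
  let ?a = "\<lambda>A. lprod L n (\<lambda>k. lprod L k (\<lambda>j. lprod L j (\<lambda>i.
    bpow L (A i j k) (assoc (x i) (x j) (x k)))))"
  have "?p Q \<in> center_invol" "?c Q' \<in> center_invol" "?a Q'' \<in> center_invol" for Q Q' Q''
    using gens_closed by (auto intro!: lprod_in_center_invol)
  note central = this
  have pm: "?p P \<odot> ?p P' = ?p (\<lambda>i. P i \<noteq> P' i)"
    using gens_closed by (subst lprod_mult) (auto simp: bpow_mult intro!: lprod_cong)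
  have cm': "?c C \<odot> ?c C' = ?c (\<lambda>i j. C i j \<noteq> C' i j)"
    using gens_closed
    by (subst lprod_mult) (auto simp: bpow_mult lprod_mult intro!: lprod_cong lprod_in_center_invol)
  have am2: "lprod L k (\<lambda>j. lprod L j (\<lambda>i. bpow L (A i j k) (assoc (x i) (x j) (x k)))) \<odot>
     lprod L k (\<lambda>j. lprod L j (\<lambda>i. bpow L (A' i j k) (assoc (x i) (x j) (x k)))) =
     lprod L k (\<lambda>j. lprod L j (\<lambda>i. bpow L (A i j k \<noteq> A' i j k) (assoc (x i) (x j) (x k))))"
    if "k < n" for k
    using gens_closed that
    by (subst lprod_mult) (auto simp: bpow_mult lprod_mult intro!: lprod_cong lprod_in_center_invol)
  have am: "?a A \<odot> ?a A' = ?a (\<lambda>i j k. A i j k \<noteq> A' i j k)"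
    using gens_closed by (subst lprod_mult) (auto simp: am2 intro!: lprod_cong lprod_in_center_invol)
  have "cword c \<odot> cword d = (?p P \<odot> (?c C \<odot> ?a A)) \<odot> (?p P' \<odot> (?c C' \<odot> ?a A'))"
    unfolding central_word_def c d by simp
  also have "\<dots> = (?p P \<odot> ?p P') \<odot> ((?c C \<odot> ?c C') \<odot> (?a A \<odot> ?a A'))"
    using central by (simp add: center_ac)
  also have "\<dots> = cword (coeffs_xor c d)"
    unfolding central_word_def coeffs_xor_def c d pm cm' am by simp
  finally show ?thesis .
qed

lemma central_words_mult_closed [simp]:
  "a \<in> central_words \<Longrightarrow> b \<in> central_words \<Longrightarrow> a \<odot> b \<in> central_words"
  unfolding central_words_def using cword_mult by auto

lemma cword_trivial:
  assumes "\<And>i. i < n \<Longrightarrow> \<not> P i" and "\<And>i j. i < j \<Longrightarrow> j < n \<Longrightarrow> \<not> C i j"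
    and "\<And>i j k. i < j \<Longrightarrow> j < k \<Longrightarrow> k < n \<Longrightarrow> \<not> A i j k"
  shows "cword (P, C, A) = \<one>"
  using assms by (simp add: central_word_def lprod_eq_one lprod2_eq_one lprod3_eq_one)

lemma one_in_central_words [simp]: "\<one> \<in> central_words"
  unfolding central_words_def by (rule range_eqI, rule cword_trivial[symmetric]) auto

lemma sq_gen_in_central_words: "i < n \<Longrightarrow> sq (x i) \<in> central_words"
  unfolding central_words_def
  by (rule range_eqI[of _ _ "(\<lambda>j. j = i, \<lambda>_ _. False, \<lambda>_ _ _. False)"])
    (simp add: central_word_def gens_closed lprod_eq_one lprod2_eq_one lprod3_eq_one lprod_single)

lemma comm_gen_ordered_in_central_words:
  assumes "i < j" "j < n"
  shows "comm (x i) (x j) \<in> central_words"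
proof -
  have "lprod L n (\<lambda>b. lprod L b (\<lambda>a. bpow L ((a, b) = (i, j)) (comm (x a) (x b)))) =
      comm (x i) (x j)"
    using assms gens_closed by (subst lprod2_single[of i j]) auto
  then have "cword (\<lambda>_. False, \<lambda>a b. (a, b) = (i, j), \<lambda>_ _ _. False) = comm (x i) (x j)"
    using assms gens_closed by (simp add: central_word_def lprod_eq_one lprod3_eq_one)
  then show ?thesis
    unfolding central_words_def by (metis rangeI)
qed

lemma assoc_gen_ordered_in_central_words:
  assumes "i < j" "j < k" "k < n"
  shows "assoc (x i) (x j) (x k) \<in> central_words"
proof -
  have "lprod L n (\<lambda>c. lprod L c (\<lambda>b. lprod L b (\<lambda>a.
      bpow L ((a, b, c) = (i, j, k)) (assoc (x a) (x b) (x c))))) = assoc (x i) (x j) (x k)"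
    using assms gens_closed by (subst lprod3_single[of i j k]) auto
  then have "cword (\<lambda>_. False, \<lambda>_ _. False, \<lambda>a b c. (a, b, c) = (i, j, k)) =
      assoc (x i) (x j) (x k)"
    using assms gens_closed by (simp add: central_word_def lprod_eq_one lprod2_eq_one)
  then show ?thesis
    unfolding central_words_def by (metis rangeI)
qed

lemma comm_gen_in_central_words:
  assumes "i < n" "j < n"
  shows "comm (x i) (x j) \<in> central_words"
  using assms comm_gen_ordered_in_central_words[of i j] comm_gen_ordered_in_central_words[of j i]
    comm_sym[of "x i" "x j"] gens_closed
  by (cases i j rule: linorder_cases) auto

lemma assoc_gen_in_central_words:
  assumes "i < n" "j < n" "k < n"
  shows "assoc (x i) (x j) (x k) \<in> central_words"
proof -
  have "x i \<in> G" "x j \<in> G" "x k \<in> G"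
    using assms gens_closed by auto
  note sym = assoc_sym12[OF this(1,2,3)] assoc_sym12[OF this(1,3,2)] assoc_sym12[OF this(2,3,1)]
    assoc_sym23[OF this(1,2,3)] assoc_sym23[OF this(2,1,3)] assoc_sym23[OF this(3,1,2)] this
  show ?thesis
    using assms assoc_gen_ordered_in_central_words[of i j k]
      assoc_gen_ordered_in_central_words[of i k j] assoc_gen_ordered_in_central_words[of j i k]
      assoc_gen_ordered_in_central_words[of j k i] assoc_gen_ordered_in_central_words[of k i j]
      assoc_gen_ordered_in_central_words[of k j i]
    by (cases i j rule: linorder_cases; cases j k rule: linorder_cases;
        cases i k rule: linorder_cases)
      (simp_all add: sym)
qed

lemma S_image_in_central_words:
  assumes w: "w \<in> S"
    and closed: "\<And>w. w \<in> S \<Longrightarrow> h w \<in> G"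
    and gens: "\<And>i. i < n \<Longrightarrow> h (x i) \<in> central_words"
    and one: "h \<one> \<in> central_words"
    and mult: "\<And>a b. a \<in> S \<Longrightarrow> b \<in> S \<Longrightarrow> h (a \<odot> b) = h a \<odot> (h b \<odot> q a b)"
    and q: "\<And>a b. a \<in> S \<Longrightarrow> b \<in> S \<Longrightarrow> q a b \<in> central_words"
  shows "h w \<in> central_words"
  using w
proof (induction rule: lgen.induct)
  case (gen_base y)
  then show ?case
    using gens by auto
next
  case gen_one
  then show ?case
    using one by simp
next
  case (gen_mult a b)
  then show ?case
    using mult q by simp
next
  case (gen_ldiv a b)
  let ?w = "ldiv a b"
  have w: "?w \<in> S"
    using gen_ldiv.hyps by (rule lgen.gen_ldiv)
  have G: "a \<in> G" "b \<in> G" "h a \<in> G" "h ?w \<in> G"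
    using gen_ldiv.hyps w S_closed closed by auto
  have q': "q a ?w \<in> central_words"
    using gen_ldiv.hyps(1) w by (rule q)
  have "h b = h a \<odot> (h ?w \<odot> q a ?w)"
    using mult[OF gen_ldiv.hyps(1) w] G by simp
  also have "\<dots> = h ?w \<odot> (q a ?w \<odot> h a)"
    using center_commute[of "h a" "h ?w \<odot> q a ?w"] mult_center_center[of "q a ?w" "h a" "h ?w"]
      gen_ldiv.IH G q'
    by simp
  finally have "h ?w = h b \<odot> (q a ?w \<odot> h a)"
    using center_invol_move[of "h b" "h ?w" "q a ?w \<odot> h a"] G gen_ldiv.IH q' by simp
  then show ?case
    using gen_ldiv.IH q' by simp
next
  case (gen_rdiv a b)
  let ?w = "rdiv a b"
  have w: "?w \<in> S"
    using gen_rdiv.hyps by (rule lgen.gen_rdiv)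
  have G: "a \<in> G" "b \<in> G" "h b \<in> G" "h ?w \<in> G"
    using gen_rdiv.hyps w S_closed closed by auto
  have q': "q ?w b \<in> central_words"
    using w gen_rdiv.hyps(2) by (rule q)
  have "h a = h ?w \<odot> (h b \<odot> q ?w b)"
    using mult[OF w gen_rdiv.hyps(2)] G by simp
  then have "h ?w = h a \<odot> (h b \<odot> q ?w b)"
    using center_invol_move[of "h a" "h ?w" "h b \<odot> q ?w b"] G gen_rdiv.IH q' by simp
  then show ?case
    using gen_rdiv.IH q' by simp
qed

lemma assoc_gen_gen_S_in_central_words:
  assumes "i < n" "j < n" "w \<in> S"
  shows "assoc (x i) (x j) w \<in> central_words"
proof (rule S_image_in_central_words[where h = "assoc (x i) (x j)"])
  show "assoc (x i) (x j) (a \<odot> b) = assoc (x i) (x j) a \<odot> (assoc (x i) (x j) b \<odot> \<one>)"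
    if "a \<in> S" "b \<in> S" for a b
    using that assms gens_closed S_closed assoc_mult_3[of a b "x i" "x j"] by simp
qed (use assms gens_closed S_closed assoc_gen_in_central_words in simp_all)

lemma assoc_gen_S_S_in_central_words:
  assumes "i < n" "v \<in> S" "w \<in> S"
  shows "assoc (x i) v w \<in> central_words"
proof (rule S_image_in_central_words[where h = "\<lambda>v. assoc (x i) v w"])
  show "assoc (x i) (a \<odot> b) w = assoc (x i) a w \<odot> (assoc (x i) b w \<odot> \<one>)"
    if "a \<in> S" "b \<in> S" for a b
    using that assms gens_closed S_closed assoc_mult_2[of a b "x i" w] by simp
qed (use assms gens_closed S_closed assoc_gen_gen_S_in_central_words in simp_all)

lemma assoc_S_in_central_words:
  assumes "u \<in> S" "v \<in> S" "w \<in> S"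
  shows "assoc u v w \<in> central_words"
proof (rule S_image_in_central_words[where h = "\<lambda>u. assoc u v w"])
  show "assoc (a \<odot> b) v w = assoc a v w \<odot> (assoc b v w \<odot> \<one>)" if "a \<in> S" "b \<in> S" for a b
    using that assms S_closed assoc_mult_1[of a b v w] by simp
qed (use assms S_closed assoc_gen_S_S_in_central_words in simp_all)

lemma comm_S_gen_in_central_words:
  assumes "i < n" "w \<in> S"
  shows "comm w (x i) \<in> central_words"
proof (rule S_image_in_central_words[where h = "\<lambda>w. comm w (x i)"])
  show "comm (a \<odot> b) (x i) = comm a (x i) \<odot> (comm b (x i) \<odot> assoc a b (x i))"
    if "a \<in> S" "b \<in> S" for a b
    using that assms gens_closed S_closed comm_mult_left[of a b "x i"] by simp
  show "assoc a b (x i) \<in> central_words" if "a \<in> S" "b \<in> S" for a b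
    using that assms gen_in_S by (intro assoc_S_in_central_words)
qed (use assms gens_closed S_closed comm_gen_in_central_words in simp_all)

section \<open>Normal form\<close>

definition equiv_mod (infix "\<approx>" 50) where
  "p \<approx> q \<longleftrightarrow> p \<in> G \<and> q \<in> G \<and> (\<exists>z\<in>central_words. p = q \<odot> z)"

lemma equiv_modI: "q \<in> G \<Longrightarrow> z \<in> central_words \<Longrightarrow> p = q \<odot> z \<Longrightarrow> p \<approx> q"
  unfolding equiv_mod_def by auto

lemma equiv_modE:
  assumes "p \<approx> q"
  obtains z where "p \<in> G" "q \<in> G" "z \<in> central_words" "p = q \<odot> z"
  using assms unfolding equiv_mod_def by blast

lemma equiv_mod_refl: "q \<in> G \<Longrightarrow> q \<approx> q"
  by (rule equiv_modI[of _ "\<one>"]) simp_all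

lemma equiv_mod_sym:
  assumes "p \<approx> q"
  shows "q \<approx> p"
proof -
  obtain z where "p \<in> G" "q \<in> G" "z \<in> central_words" "p = q \<odot> z"
    using assms by (rule equiv_modE)
  then show ?thesis
    by (intro equiv_modI[of p z]) (simp_all add: mult_center_center)
qed

lemma equiv_mod_trans [trans]:
  assumes "p \<approx> q" and "q \<approx> r"
  shows "p \<approx> r"
proof -
  obtain z where "p \<in> G" "q \<in> G" "z \<in> central_words" "p = q \<odot> z"
    using assms(1) by (rule equiv_modE)
  moreover obtain z' where "r \<in> G" "z' \<in> central_words" "q = r \<odot> z'"
    using assms(2) by (rule equiv_modE)
  ultimately show ?thesis
    by (intro equiv_modI[of r "z' \<odot> z"]) (simp_all add: mult_center_center)
qed

lemma equiv_mod_mult_left: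
  assumes "p \<approx> q" and "r \<in> G"
  shows "r \<odot> p \<approx> r \<odot> q"
proof -
  obtain z where "q \<in> G" "z \<in> central_words" "p = q \<odot> z"
    using assms(1) by (rule equiv_modE)
  then show ?thesis
    using assms(2) by (intro equiv_modI[of _ z]) (simp_all add: mult_center_assoc)
qed

lemma equiv_mod_mult_right:
  assumes "p \<approx> q" and "r \<in> G"
  shows "p \<odot> r \<approx> q \<odot> r"
proof -
  obtain z where "q \<in> G" "z \<in> central_words" "p = q \<odot> z"
    using assms(1) by (rule equiv_modE)
  then show ?thesis
    using assms(2) by (intro equiv_modI[of _ z]) (simp_all add: center_mult_swap)
qed

lemma equiv_mod_left_cancel:
  assumes "r \<odot> p \<approx> r \<odot> q" and "r \<in> G" "p \<in> G" "q \<in> G"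
  shows "p \<approx> q"
proof -
  obtain z where z: "z \<in> central_words" "r \<odot> p = (r \<odot> q) \<odot> z"
    using assms(1) by (rule equiv_modE)
  then have "p = q \<odot> z"
    using assms(2-4) left_cancel[of r p "q \<odot> z"] by (simp add: mult_center_assoc)
  then show ?thesis
    using z assms(4) by (intro equiv_modI)
qed

lemma equiv_mod_right_cancel:
  assumes "p \<odot> r \<approx> q \<odot> r" and "r \<in> G" "p \<in> G" "q \<in> G"
  shows "p \<approx> q"
proof -
  obtain z where z: "z \<in> central_words" "p \<odot> r = (q \<odot> r) \<odot> z"
    using assms(1) by (rule equiv_modE)
  then have "p = q \<odot> z"
    using assms(2-4) right_cancel[of r p "q \<odot> z"] by (simp add: center_mult_swap)
  then show ?thesis
    using z assms(4) by (intro equiv_modI)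
qed

lemma assoc_equiv:
  assumes "u \<in> S" "v \<in> S" "w \<in> S"
  shows "(u \<odot> v) \<odot> w \<approx> u \<odot> (v \<odot> w)"
  using assms S_closed assoc_eq[of u v w] assoc_S_in_central_words[OF assms]
  by (intro equiv_modI[of _ "assoc u v w"]) simp_all

lemma comm_gen_equiv:
  assumes "i < n" "u \<in> S"
  shows "u \<odot> x i \<approx> x i \<odot> u"
  using assms S_closed gens_closed comm_eq[of u "x i"] comm_S_gen_in_central_words[OF assms]
  by (intro equiv_modI[of _ "comm u (x i)"]) simp_all

lemma gen_mult_equiv:
  assumes i: "i < n" and uv: "u \<in> S" "v \<in> S"
  shows "u \<odot> (x i \<odot> v) \<approx> x i \<odot> (u \<odot> v)"
proof -
  have G: "u \<in> G" "v \<in> G" "x i \<in> G"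
    using uv S_closed gens_closed i by auto
  have "u \<odot> (x i \<odot> v) \<approx> (u \<odot> x i) \<odot> v"
    using assoc_equiv[OF uv(1) gen_in_S[OF i] uv(2)] by (rule equiv_mod_sym)
  also have "\<dots> \<approx> (x i \<odot> u) \<odot> v"
    using comm_gen_equiv[OF i uv(1)] G(2) by (rule equiv_mod_mult_right)
  also have "\<dots> \<approx> x i \<odot> (u \<odot> v)"
    using gen_in_S[OF i] uv by (rule assoc_equiv)
  finally show ?thesis .
qed

lemma gen_mult_gen_equiv:
  assumes i: "i < n" and uv: "u \<in> S" "v \<in> S"
  shows "(x i \<odot> u) \<odot> (x i \<odot> v) \<approx> u \<odot> v"
proof -
  have G: "u \<in> G" "v \<in> G" "x i \<in> G"
    using uv S_closed gens_closed i by auto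
  have "(x i \<odot> u) \<odot> (x i \<odot> v) \<approx> x i \<odot> (u \<odot> (x i \<odot> v))"
    using gen_in_S[OF i] uv by (intro assoc_equiv lgen.gen_mult)
  also have "\<dots> \<approx> x i \<odot> (x i \<odot> (u \<odot> v))"
    using gen_mult_equiv[OF i uv] G(3) by (rule equiv_mod_mult_left)
  also have "\<dots> = (u \<odot> v) \<odot> sq (x i)"
    using G by (simp add: left_alternative[symmetric] sq_eq[symmetric] center_commute)
  also have "\<dots> \<approx> u \<odot> v"
    using G sq_gen_in_central_words[OF i] by (intro equiv_modI) simp_all
  finally show ?thesis .
qed

lemma ordered_word_in_S: "m \<le> n \<Longrightarrow> ordered_word L x m a \<in> S"
  by (induction m) (simp_all add: lgen.gen_one lgen.gen_mult gen_in_S)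

lemma ordered_word_closed: "m \<le> n \<Longrightarrow> ordered_word L x m a \<in> G"
  using ordered_word_in_S S_closed by blast

lemma ordered_word_single: "m \<le> n \<Longrightarrow> ordered_word L x m (\<lambda>j. j = i) = (if i < m then x i else \<one>)"
  by (induction m) (auto simp: gens_closed)

lemma ordered_word_none: "ordered_word L x m (\<lambda>_. False) = \<one>"
  by (induction m) simp_all

lemma ordered_word_mult:
  "m \<le> n \<Longrightarrow> ordered_word L x m a \<odot> ordered_word L x m b \<approx> ordered_word L x m (\<lambda>i. a i \<noteq> b i)"
proof (induction m)
  case 0
  then show ?case by (simp add: equiv_mod_refl)
next
  case (Suc m)
  let ?U = "ordered_word L x m a" and ?V = "ordered_word L x m b"
    and ?W = "ordered_word L x m (\<lambda>i. a i \<noteq> b i)"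
  have m: "m < n" and S: "?U \<in> S" "?V \<in> S" "?W \<in> S"
    using Suc.prems ordered_word_in_S by auto
  have IH: "?U \<odot> ?V \<approx> ?W"
    using Suc by simp
  have G: "?U \<in> G" "?V \<in> G" "x m \<in> G"
    using S S_closed m gens_closed by auto
  consider "a m" "\<not> b m" | "\<not> a m" "b m" | "a m" "b m" | "\<not> a m" "\<not> b m"
    by blast
  then show ?case
  proof cases
    case 1
    have "(x m \<odot> ?U) \<odot> ?V \<approx> x m \<odot> (?U \<odot> ?V)"
      using gen_in_S[OF m] S(1,2) by (rule assoc_equiv)
    also have "\<dots> \<approx> x m \<odot> ?W"
      using IH G(3) by (rule equiv_mod_mult_left)
    finally show ?thesis
      using 1 by simp
  next
    case 2
    have "?U \<odot> (x m \<odot> ?V) \<approx> x m \<odot> (?U \<odot> ?V)"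
      using m S(1,2) by (rule gen_mult_equiv)
    also have "\<dots> \<approx> x m \<odot> ?W"
      using IH G(3) by (rule equiv_mod_mult_left)
    finally show ?thesis
      using 2 by simp
  next
    case 3
    have "(x m \<odot> ?U) \<odot> (x m \<odot> ?V) \<approx> ?U \<odot> ?V"
      using m S(1,2) by (rule gen_mult_gen_equiv)
    also note IH
    finally show ?thesis
      using 3 by simp
  next
    case 4
    then show ?thesis
      using IH by simp
  qed
qed

theorem normal_form: "w \<in> S \<Longrightarrow> \<exists>a. w \<approx> ordered_word L x n a"
proof (induction rule: lgen.induct)
  case (gen_base y)
  then obtain i where i: "i < n" "y = x i"
    by auto
  then have "y \<approx> ordered_word L x n (\<lambda>j. j = i)"
    by (simp add: ordered_word_single gens_closed equiv_mod_refl)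
  then show ?case by blast
next
  case gen_one
  have "\<one> \<approx> ordered_word L x n (\<lambda>_. False)"
    by (simp add: ordered_word_none equiv_mod_refl)
  then show ?case by blast
next
  case (gen_mult w1 w2)
  then obtain a1 a2 where "w1 \<approx> ordered_word L x n a1" "w2 \<approx> ordered_word L x n a2"
    by blast
  then have "w1 \<odot> w2 \<approx> ordered_word L x n a1 \<odot> ordered_word L x n a2"
    by (metis equiv_mod_mult_left equiv_mod_mult_right equiv_mod_trans equiv_modE)
  also have "\<dots> \<approx> ordered_word L x n (\<lambda>i. a1 i \<noteq> a2 i)"
    by (rule ordered_word_mult) simp
  finally show ?case by blast
next
  case (gen_ldiv w1 w2)
  then obtain a1 a2 where a: "w1 \<approx> ordered_word L x n a1" "w2 \<approx> ordered_word L x n a2"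
    by blast
  let ?q = "ldiv w1 w2" and ?g = "\<lambda>i. a1 i \<noteq> a2 i"
  have G: "w1 \<in> G" "w2 \<in> G" "?q \<in> G" "ordered_word L x n ?g \<in> G"
    using a by (auto elim!: equiv_modE simp: ordered_word_closed)
  have "w1 \<odot> ordered_word L x n ?g \<approx> ordered_word L x n a1 \<odot> ordered_word L x n ?g"
    using a(1) G(4) by (rule equiv_mod_mult_right)
  also have "\<dots> \<approx> ordered_word L x n a2"
  proof -
    have "(\<lambda>i. a1 i \<noteq> ?g i) = a2"
      by auto
    then show ?thesis
      using ordered_word_mult[of n a1 ?g] by simp
  qed
  also have "\<dots> \<approx> w1 \<odot> ?q"
    using a(2) G by (simp add: equiv_mod_sym)
  finally have "ordered_word L x n ?g \<approx> ?q"
    using G(1,4,3) by (rule equiv_mod_left_cancel)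
  then show ?case
    by (blast intro: equiv_mod_sym)
next
  case (gen_rdiv w2 w1)
  then obtain a1 a2 where a: "w1 \<approx> ordered_word L x n a1" "w2 \<approx> ordered_word L x n a2"
    by blast
  let ?q = "rdiv w2 w1" and ?g = "\<lambda>i. a2 i \<noteq> a1 i"
  have G: "w1 \<in> G" "w2 \<in> G" "?q \<in> G" "ordered_word L x n ?g \<in> G"
    using a by (auto elim!: equiv_modE simp: ordered_word_closed)
  have "ordered_word L x n ?g \<odot> w1 \<approx> ordered_word L x n ?g \<odot> ordered_word L x n a1"
    using a(1) G(4) by (rule equiv_mod_mult_left)
  also have "\<dots> \<approx> ordered_word L x n a2"
  proof -
    have "(\<lambda>i. ?g i \<noteq> a1 i) = a2"
      by auto
    then show ?thesis
      using ordered_word_mult[of n ?g a1] by simp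
  qed
  also have "\<dots> \<approx> ?q \<odot> w1"
    using a(2) G by (simp add: equiv_mod_sym)
  finally have "ordered_word L x n ?g \<approx> ?q"
    using G(1,4,3) by (rule equiv_mod_right_cancel)
  then show ?case
    by (blast intro: equiv_mod_sym)
qed

end

section \<open>Separating words by homomorphisms\<close>

context
  fixes L :: "'a loop" and K :: "'b loop" and h :: "'a \<Rightarrow> 'b"
  assumes L: "is_loop L" and K: "is_loop K" and h: "loop_hom L K h"
begin

interpretation L: loop L using L by (rule loop.intro)
interpretation K: loop K using K by (rule loop.intro)

lemma loop_hom_lprod:
  "(\<And>i. i < m \<Longrightarrow> g i \<in> L.G) \<Longrightarrow> h (lprod L m g) = lprod K m (\<lambda>i. h (g i))"
  by (induction m) (simp_all add: loop_hom_one[OF h] loop_hom_mult[OF h] L.lprod_closed)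

lemma loop_hom_bpow: "h (bpow L b d) = bpow K b (h d)"
  by (simp add: bpow_def loop_hom_one[OF h])

lemma loop_hom_ordered_word:
  "(\<And>i. i < m \<Longrightarrow> x i \<in> L.G) \<Longrightarrow> (\<And>i. i < m \<Longrightarrow> h (x i) = \<sigma> i) \<Longrightarrow>
    h (ordered_word L x m a) = ordered_word K \<sigma> m a"
  by (induction m) (simp_all add: loop_hom_one[OF h] loop_hom_mult[OF h] L.ordered_word_carrier)

lemma loop_hom_central_word:
  assumes x: "\<And>i. i < n \<Longrightarrow> x i \<in> L.G" and \<sigma>: "\<And>i. i < n \<Longrightarrow> h (x i) = \<sigma> i"
  shows "h (central_word L x n (P, C, A)) = central_word K \<sigma> n (P, C, A)"
proof -
  have squares: "h (lprod L n (\<lambda>i. bpow L (P i) (L.sq (x i)))) =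
      lprod K n (\<lambda>i. bpow K (P i) (K.sq (\<sigma> i)))"
    using x \<sigma> by (simp add: loop_hom_lprod loop_hom_bpow loop_hom_sq[OF h] cong: lprod_cong)
  have comms: "h (lprod L n (\<lambda>j. lprod L j (\<lambda>i. bpow L (C i j) (L.comm (x i) (x j))))) =
      lprod K n (\<lambda>j. lprod K j (\<lambda>i. bpow K (C i j) (K.comm (\<sigma> i) (\<sigma> j))))"
    using x \<sigma>
    by (simp add: loop_hom_lprod loop_hom_bpow loop_hom_comm[OF L K h] L.lprod_closed cong: lprod_cong)
  have assocs: "h (lprod L n (\<lambda>k. lprod L k (\<lambda>j. lprod L j (\<lambda>i.
        bpow L (A i j k) (L.assoc (x i) (x j) (x k)))))) =
      lprod K n (\<lambda>k. lprod K k (\<lambda>j. lprod K j (\<lambda>i.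
        bpow K (A i j k) (K.assoc (\<sigma> i) (\<sigma> j) (\<sigma> k)))))"
    using x \<sigma>
    by (simp add: loop_hom_lprod loop_hom_bpow loop_hom_assoc[OF L K h] L.lprod_closed cong: lprod_cong)
  show ?thesis
    using x by (simp add: central_word_def loop_hom_mult[OF h] L.lprod_closed squares comms assocs)
qed

end

context E_loop
begin

lemma ordered_word_point:
  "q \<in> G \<Longrightarrow> ordered_word L ((\<lambda>_. \<one>)(i0 := q)) m a = (if a i0 \<and> i0 < m then q else \<one>)"
  by (induction m) auto

lemma central_word_point1:
  assumes "i0 < n" and q: "q \<in> G"
  shows "central_word L ((\<lambda>_. \<one>)(i0 := q)) n (P, C, A) = bpow L (P i0) (sq q)"
proof -
  have "lprod L n (\<lambda>i. bpow L (P i) (sq (((\<lambda>_. \<one>)(i0 := q)) i))) = bpow L (P i0) (sq q)"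
    using assms by (subst lprod_single[of i0]) auto
  then show ?thesis
    using q by (simp add: central_word_def lprod2_eq_one lprod3_eq_one)
qed

lemma central_word_point2:
  assumes "i0 < j0" "j0 < n" and q: "q \<in> G" "r \<in> G" and P: "\<And>i. i < n \<Longrightarrow> \<not> P i"
  shows "central_word L ((\<lambda>_. \<one>)(i0 := q, j0 := r)) n (P, C, A) =
    bpow L (C i0 j0) (comm q r)"
proof -
  let ?\<sigma> = "(\<lambda>_. \<one>)(i0 := q, j0 := r)"
  have "lprod L n (\<lambda>j. lprod L j (\<lambda>i. bpow L (C i j) (comm (?\<sigma> i) (?\<sigma> j)))) =
      bpow L (C i0 j0) (comm q r)"
    using assms by (subst lprod2_single[of i0 j0]) auto
  moreover have "lprod L n (\<lambda>k. lprod L k (\<lambda>j. lprod L j (\<lambda>i.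
      bpow L (A i j k) (assoc (?\<sigma> i) (?\<sigma> j) (?\<sigma> k))))) = \<one>"
    using q by (intro lprod3_eq_one) auto
  ultimately show ?thesis
    using q P by (simp add: central_word_def lprod_eq_one)
qed

lemma assoc_point3_trivial:
  fixes i j k i0 j0 k0 :: nat
  assumes "i < j" "j < k" "i0 < j0" "j0 < k0" "(i, j, k) \<noteq> (i0, j0, k0)"
    and "q \<in> G" "r \<in> G" "t \<in> G"
  defines "\<sigma> \<equiv> (\<lambda>_. \<one>)(i0 := q, j0 := r, k0 := t)"
  shows "assoc (\<sigma> i) (\<sigma> j) (\<sigma> k) = \<one>"
proof -
  have "i \<notin> {i0, j0, k0} \<or> j \<notin> {i0, j0, k0} \<or> k \<notin> {i0, j0, k0}"
    using assms(1-5) by (simp only: insert_iff empty_iff simp_thms prod.inject) arith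
  moreover have "\<sigma> l \<in> G" for l
    using assms(6-8) by (simp add: \<sigma>_def)
  ultimately show ?thesis
    by (elim disjE) (simp_all add: \<sigma>_def)
qed

lemma central_word_point3:
  assumes "i0 < j0" "j0 < k0" "k0 < n" and q: "q \<in> G" "r \<in> G" "t \<in> G"
    and P: "\<And>i. i < n \<Longrightarrow> \<not> P i" and C: "\<And>i j. i < j \<Longrightarrow> j < n \<Longrightarrow> \<not> C i j"
  shows "central_word L ((\<lambda>_. \<one>)(i0 := q, j0 := r, k0 := t)) n (P, C, A) =
    bpow L (A i0 j0 k0) (assoc q r t)"
proof -
  let ?\<sigma> = "(\<lambda>_. \<one>)(i0 := q, j0 := r, k0 := t)"
  have trivial: "bpow L (A i j k) (assoc (?\<sigma> i) (?\<sigma> j) (?\<sigma> k)) = \<one>"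
    if "i < j" "j < k" "k < n" "(i, j, k) \<noteq> (i0, j0, k0)" for i j k
    using assoc_point3_trivial[OF that(1,2) assms(1,2) that(4) q] by simp
  have "?\<sigma> i0 = q" "?\<sigma> j0 = r" "?\<sigma> k0 = t"
    using assms(1,2) by auto
  then have assocs: "lprod L n (\<lambda>k. lprod L k (\<lambda>j. lprod L j (\<lambda>i.
      bpow L (A i j k) (assoc (?\<sigma> i) (?\<sigma> j) (?\<sigma> k))))) = bpow L (A i0 j0 k0) (assoc q r t)"
    using q by (subst lprod3_single[OF assms(1-3) trivial]) simp_all
  have squares: "lprod L n (\<lambda>i. bpow L (P i) (sq (?\<sigma> i))) = \<one>"
    using P by (intro lprod_eq_one) simp
  have comms: "lprod L n (\<lambda>j. lprod L j (\<lambda>i. bpow L (C i j) (comm (?\<sigma> i) (?\<sigma> j)))) = \<one>"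
    using C by (intro lprod2_eq_one) simp
  show ?thesis
    unfolding central_word_def prod.case squares comms assocs using q by simp
qed

text \<open>Evaluating a word at assignments of the generators that are trivial except at one, two or
  three positions isolates, one after the other, its linear part, its squares, its commutators and
  its associators.\<close>

lemma word_coefficients_trivial:
  assumes q: "q1 \<in> G" "q2 \<in> G" "q3 \<in> G"
    and nontrivial: "q1 \<noteq> \<one>" "q1 \<odot> sq q1 \<noteq> \<one>" "sq q1 \<noteq> \<one>" "comm q1 q2 \<noteq> \<one>" "assoc q1 q2 q3 \<noteq> \<one>"
    and vanish: "\<And>\<sigma>. (\<And>i. \<sigma> i \<in> {\<one>, q1, q2, q3}) \<Longrightarrow>
      ordered_word L \<sigma> n a \<odot> central_word L \<sigma> n (P, C, A) = \<one>"
  shows "(\<forall>i<n. \<not> a i) \<and> (\<forall>i<n. \<not> P i) \<and> (\<forall>i j. i < j \<longrightarrow> j < n \<longrightarrow> \<not> C i j) \<and>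
    (\<forall>i j k. i < j \<longrightarrow> j < k \<longrightarrow> k < n \<longrightarrow> \<not> A i j k)"
proof (intro conjI allI impI)
  have vanish1: "ordered_word L ((\<lambda>_. \<one>)(i := q1)) n a \<odot> bpow L (P i) (sq q1) = \<one>" if "i < n" for i
  proof -
    have "\<And>l. ((\<lambda>_. \<one>)(i := q1)) l \<in> {\<one>, q1, q2, q3}"
      by simp
    then show ?thesis
      using vanish central_word_point1[OF that q(1)] by metis
  qed
  show a: "\<not> a i" if "i < n" for i
    using vanish1[OF that] q nontrivial(1,2) that by (cases "P i") (auto simp: ordered_word_point)
  then have ordered_word_one: "ordered_word L \<sigma> n a = \<one>" for \<sigma>
    by (rule ordered_word_trivial)
  show P: "\<not> P i" if "i < n" for i
    using vanish1[OF that] q nontrivial(3) ordered_word_one by (cases "P i") auto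
  show C: "\<not> C i j" if "i < j" "j < n" for i j
  proof -
    have "\<And>l. ((\<lambda>_. \<one>)(i := q1, j := q2)) l \<in> {\<one>, q1, q2, q3}"
      by simp
    then have "ordered_word L ((\<lambda>_. \<one>)(i := q1, j := q2)) n a \<odot>
        central_word L ((\<lambda>_. \<one>)(i := q1, j := q2)) n (P, C, A) = \<one>"
      by (rule vanish)
    then have "bpow L (C i j) (comm q1 q2) = \<one>"
      using central_word_point2[OF that q(1,2), where P = P and C = C and A = A] P
        ordered_word_one q by simp
    then show ?thesis
      using nontrivial(4) by (cases "C i j") auto
  qed
  show "\<not> A i j k" if "i < j" "j < k" "k < n" for i j k
  proof -
    have "\<And>l. ((\<lambda>_. \<one>)(i := q1, j := q2, k := q3)) l \<in> {\<one>, q1, q2, q3}"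
      by simp
    then have "ordered_word L ((\<lambda>_. \<one>)(i := q1, j := q2, k := q3)) n a \<odot>
        central_word L ((\<lambda>_. \<one>)(i := q1, j := q2, k := q3)) n (P, C, A) = \<one>"
      by (rule vanish)
    then have "bpow L (A i j k) (assoc q1 q2 q3) = \<one>"
      using central_word_point3[OF that q, where P = P and C = C and A = A] P C
        ordered_word_one q by simp
    then show ?thesis
      using nontrivial(5) by (cases "A i j k") auto
  qed
qed

end

context E_gen
begin

lemma normal_form_coeffs:
  assumes "w \<in> S"
  obtains a P C A where "w = ordered_word L x n a \<odot> cword (P, C, A)"
proof -
  obtain a where "w \<approx> ordered_word L x n a"
    using normal_form[OF assms] by blast
  then obtain z where "z \<in> central_words" "w = ordered_word L x n a \<odot> z"
    by (rule equiv_modE)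
  moreover obtain c where "z = cword c"
    using \<open>z \<in> central_words\<close> unfolding central_words_def by blast
  moreover obtain P C A where "c = (P, C, A)"
    by (rule prod_cases3)
  ultimately show ?thesis
    using that by simp
qed

lemma loop_hom_word:
  assumes K: "is_loop K" and \<tau>: "loop_hom L K \<tau>" and \<sigma>: "\<And>i. i < n \<Longrightarrow> \<tau> (x i) = \<sigma> i"
  shows "\<tau> (ordered_word L x n a \<odot> cword (P, C, A)) =
    lmult K (ordered_word K \<sigma> n a) (central_word K \<sigma> n (P, C, A))"
  using loop_hom_mult[OF \<tau>] ordered_word_closed loop_hom_ordered_word[OF is_loop K \<tau> gens_closed \<sigma>]
    loop_hom_central_word[OF is_loop K \<tau> gens_closed \<sigma>]
  by simp

theorem separation:
  fixes K :: "'b loop"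
  assumes K: "in_E K"
    and q: "q1 \<in> lcarrier K" "q2 \<in> lcarrier K" "q3 \<in> lcarrier K"
    and nontrivial: "q1 \<noteq> lone K" "lmult K q1 (lsq K q1) \<noteq> lone K" "lsq K q1 \<noteq> lone K"
      "lcomm K q1 q2 \<noteq> lone K" "lassoc K q1 q2 q3 \<noteq> lone K"
    and w: "w \<in> S"
    and hom: "\<And>\<sigma>. (\<And>i. \<sigma> i \<in> {lone K, q1, q2, q3}) \<Longrightarrow>
      \<exists>\<tau>. loop_hom L K \<tau> \<and> (\<forall>i<n. \<tau> (x i) = \<sigma> i) \<and> \<tau> w = lone K"
  shows "w = \<one>"
proof -
  interpret K: E_loop K
    using K by (simp add: E_loop_def E_loop_axioms_def loop_def is_loop_if_in_E)
  obtain a P C A where w_eq: "w = ordered_word L x n a \<odot> cword (P, C, A)"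
    using w by (rule normal_form_coeffs)
  have "lmult K (ordered_word K \<sigma> n a) (central_word K \<sigma> n (P, C, A)) = lone K"
    if \<sigma>: "\<And>i. \<sigma> i \<in> {lone K, q1, q2, q3}" for \<sigma>
  proof -
    obtain \<tau> where "loop_hom L K \<tau>" "\<And>i. i < n \<Longrightarrow> \<tau> (x i) = \<sigma> i" "\<tau> w = lone K"
      using hom[of \<sigma>, OF \<sigma>] by blast
    then show ?thesis
      using loop_hom_word[OF K.is_loop] w_eq by metis
  qed
  then have "(\<forall>i<n. \<not> a i) \<and> (\<forall>i<n. \<not> P i) \<and> (\<forall>i j. i < j \<longrightarrow> j < n \<longrightarrow> \<not> C i j) \<and>
      (\<forall>i j k. i < j \<longrightarrow> j < k \<longrightarrow> k < n \<longrightarrow> \<not> A i j k)"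
    by (rule K.word_coefficients_trivial[OF q nontrivial])
  then have "ordered_word L x n a = \<one>" and "cword (P, C, A) = \<one>"
    by (simp_all add: ordered_word_trivial cword_trivial)
  then show ?thesis
    using w_eq by simp
qed

end

section \<open>The octonion loop\<close>

text \<open>The octonion loop of order 16, as the code loop on \<open>GF(2)\<^sup>3 \<times> GF(2)\<close> whose factor set
  \<open>oct_cocycle\<close> is a cubic polynomial (\<open>\<noteq>\<close> on booleans is addition mod 2). Every element outside
  the centre squares to the nontrivial central element, and three independent elements do not
  associate.\<close>

type_synonym oct = "bool \<times> bool \<times> bool \<times> bool"

definition oct_cocycle :: "bool \<Rightarrow> bool \<Rightarrow> bool \<Rightarrow> bool \<Rightarrow> bool \<Rightarrow> bool \<Rightarrow> bool" where
  "oct_cocycle a0 a1 a2 b0 b1 b2 =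
    (((((((((a0 \<and> b0) \<noteq> (a1 \<and> b1)) \<noteq> (a2 \<and> b2)) \<noteq> (a0 \<and> b1)) \<noteq> (a0 \<and> b2)) \<noteq> (a1 \<and> b2))
      \<noteq> (a0 \<and> a1 \<and> b2)) \<noteq> (a0 \<and> a2 \<and> b1)) \<noteq> (a1 \<and> a2 \<and> b0))"

fun oct_mult :: "oct \<Rightarrow> oct \<Rightarrow> oct" where
  "oct_mult (a0, a1, a2, s) (b0, b1, b2, t) =
    (a0 \<noteq> b0, a1 \<noteq> b1, a2 \<noteq> b2, (s \<noteq> t) \<noteq> oct_cocycle a0 a1 a2 b0 b1 b2)"

definition octonion_loop :: "oct loop" where
  "octonion_loop = \<lparr> lcarrier = UNIV, lmult = oct_mult, lone = (False, False, False, False) \<rparr>"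

lemma octonion_loop_simps [simp]:
  "lcarrier octonion_loop = UNIV" "lmult octonion_loop = oct_mult"
  "lone octonion_loop = (False, False, False, False)"
  by (simp_all add: octonion_loop_def)

lemma oct_cocycle_zero_left [simp]: "oct_cocycle False False False b0 b1 b2 = False"
  by (simp add: oct_cocycle_def)

lemma oct_cocycle_zero_right [simp]: "oct_cocycle a0 a1 a2 False False False = False"
  by (simp add: oct_cocycle_def)

lemma is_loop_octonion_loop: "is_loop octonion_loop"
proof -
  have left: "\<exists>!y. oct_mult a y = b" for a b
  proof -
    obtain a0 a1 a2 s b0 b1 b2 t where ab: "a = (a0, a1, a2, s)" "b = (b0, b1, b2, t)"
      by (cases a, cases b) auto
    let ?y = "(a0 \<noteq> b0, a1 \<noteq> b1, a2 \<noteq> b2, (s \<noteq> t) \<noteq> oct_cocycle a0 a1 a2 (a0 \<noteq> b0) (a1 \<noteq> b1) (a2 \<noteq> b2))"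
    show ?thesis
    proof (rule ex1I[of _ ?y])
      show "oct_mult a ?y = b"
        unfolding ab by auto
      show "y = ?y" if "oct_mult a y = b" for y
        using that unfolding ab by (cases y) auto
    qed
  qed
  have right: "\<exists>!y. oct_mult y a = b" for a b
  proof -
    obtain a0 a1 a2 s b0 b1 b2 t where ab: "a = (a0, a1, a2, s)" "b = (b0, b1, b2, t)"
      by (cases a, cases b) auto
    let ?y = "(a0 \<noteq> b0, a1 \<noteq> b1, a2 \<noteq> b2, (s \<noteq> t) \<noteq> oct_cocycle (a0 \<noteq> b0) (a1 \<noteq> b1) (a2 \<noteq> b2) a0 a1 a2)"
    show ?thesis
    proof (rule ex1I[of _ ?y])
      show "oct_mult ?y a = b"
        unfolding ab by auto
      show "y = ?y" if "oct_mult y a = b" for y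
        using that unfolding ab by (cases y) auto
    qed
  qed
  have "oct_mult (False, False, False, False) y = y \<and> oct_mult y (False, False, False, False) = y" for y
    by (cases y) auto
  then show ?thesis
    unfolding is_loop_def using left right by simp
qed

interpretation octonion: loop octonion_loop
  by (rule loop.intro, rule is_loop_octonion_loop)

text \<open>The Moufang identity reduces to this identity between values of the cocycle.\<close>

lemma oct_cocycle_moufang:
  "((oct_cocycle a0 a1 a2 b0 b1 b2 \<noteq> oct_cocycle (a0 \<noteq> b0) (a1 \<noteq> b1) (a2 \<noteq> b2) a0 a1 a2)
      \<noteq> oct_cocycle ((a0 \<noteq> b0) \<noteq> a0) ((a1 \<noteq> b1) \<noteq> a1) ((a2 \<noteq> b2) \<noteq> a2) z0 z1 z2)
    = ((oct_cocycle a0 a1 a2 z0 z1 z2 \<noteq> oct_cocycle b0 b1 b2 (a0 \<noteq> z0) (a1 \<noteq> z1) (a2 \<noteq> z2))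
      \<noteq> oct_cocycle a0 a1 a2 (b0 \<noteq> (a0 \<noteq> z0)) (b1 \<noteq> (a1 \<noteq> z1)) (b2 \<noteq> (a2 \<noteq> z2)))"
  by (cases a0; cases a1; cases a2; cases b0; cases b1; cases b2; cases z0; cases z1; cases z2)
    (simp_all add: oct_cocycle_def)

lemma oct_mult_moufang:
  "oct_mult (oct_mult (oct_mult x y) x) z = oct_mult x (oct_mult y (oct_mult x z))"
proof -
  obtain a0 a1 a2 s b0 b1 b2 t z0 z1 z2 u
    where "x = (a0, a1, a2, s)" "y = (b0, b1, b2, t)" "z = (z0, z1, z2, u)"
    by (cases x, cases y, cases z) auto
  then show ?thesis
    using oct_cocycle_moufang[of a0 a1 a2 b0 b1 b2 z0 z1 z2]
    by (simp only: oct_mult.simps prod.inject) argo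
qed

lemma lsq_octonion [simp]:
  "lsq octonion_loop (a0, a1, a2, s) = (False, False, False, oct_cocycle a0 a1 a2 a0 a1 a2)"
  by (simp add: lsq_def)

lemma lcomm_octonion [simp]:
  "lcomm octonion_loop (a0, a1, a2, s) (b0, b1, b2, t) =
    (False, False, False, oct_cocycle a0 a1 a2 b0 b1 b2 \<noteq> oct_cocycle b0 b1 b2 a0 a1 a2)"
  by (rule octonion.comm_unique) auto

lemma lassoc_octonion [simp]:
  "lassoc octonion_loop (a0, a1, a2, s) (b0, b1, b2, t) (c0, c1, c2, u) =
    (False, False, False, ((oct_cocycle a0 a1 a2 b0 b1 b2 \<noteq> oct_cocycle (a0 \<noteq> b0) (a1 \<noteq> b1) (a2 \<noteq> b2) c0 c1 c2)
      \<noteq> oct_cocycle b0 b1 b2 c0 c1 c2) \<noteq> oct_cocycle a0 a1 a2 (b0 \<noteq> c0) (b1 \<noteq> c1) (b2 \<noteq> c2))"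
  by (rule octonion.assoc_unique) auto

lemma in_E_octonion_loop: "in_E octonion_loop"
  unfolding in_E_def is_moufang_def using is_loop_octonion_loop oct_mult_moufang
  by (simp add: split_paired_all split_paired_Ball_Sigma)

lemma loop_hom_eval_prod_loop:
  assumes "\<And>h. h \<in> I \<Longrightarrow> loop_hom L M h"
  shows "loop_hom L (prod_loop I M) (\<lambda>x. \<lambda>h\<in>I. h x)"
  using assms unfolding loop_hom_def prod_loop_def by (auto intro!: restrict_ext)

lemma inj_on_eval_if_separating:
  assumes L: "is_loop L" and M: "is_loop M" and I: "\<And>h. h \<in> I \<Longrightarrow> loop_hom L M h"
    and separating: "\<And>w. w \<in> lcarrier L \<Longrightarrow> (\<And>h. h \<in> I \<Longrightarrow> h w = lone M) \<Longrightarrow> w = lone L"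
  shows "inj_on (\<lambda>x. \<lambda>h\<in>I. h x) (lcarrier L)"
proof (rule inj_onI)
  interpret L: loop L using L by (rule loop.intro)
  interpret M: loop M using M by (rule loop.intro)
  fix x y assume x: "x \<in> L.G" and y: "y \<in> L.G" and eq: "(\<lambda>h\<in>I. h x) = (\<lambda>h\<in>I. h y)"
  have "h (L.ldiv x y) = lone M" if "h \<in> I" for h
  proof -
    have "h x = h y"
      using fun_cong[OF eq, of h] that by simp
    then show ?thesis
      using loop_hom_ldiv[OF L M I[OF that] x y] loop_hom_closed[OF I[OF that] y]
      by (simp add: M.ldiv_unique)
  qed
  then have "L.ldiv x y = lone L"
    using x y by (intro separating) simp_all
  then show "x = y"
    using L.mult_ldiv[OF x y] x by simp
qed

text \<open>Composing with the homomorphism \<open>M \<rightarrow> octonion_loop\<close> that sends the generators to three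
  independent elements yields all the homomorphisms needed for the separation theorem.\<close>

lemma free_E_loop_homs_separate:
  assumes F: "free_E_loop n F g" and M: "free_E_loop 3 M k" and w: "w \<in> lcarrier F"
    and trivial: "\<And>h. loop_hom F M h \<Longrightarrow> h w = lone M"
  shows "w = lone F"
proof -
  have FE: "in_E F" and gF: "\<And>i. i < n \<Longrightarrow> g i \<in> lcarrier F"
    and genF: "lgen F (g ` {..<n}) = lcarrier F"
    using F unfolding free_E_loop_def by auto
  have ME: "in_E M" and kM: "\<And>i. i < 3 \<Longrightarrow> k i \<in> lcarrier M"
    and genM: "lgen M (k ` {..<3}) = lcarrier M"
    using M unfolding free_E_loop_def by auto
  interpret F: E_gen F n g
    using FE gF by unfold_locales (simp_all add: is_loop_if_in_E)
  interpret M: loop M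
    using ME by (simp add: loop_def is_loop_if_in_E)
  define e where "e i = (i = (0::nat), i = 1, i = 2, False)" for i
  have "countable (lcarrier M)"
    using countable_lgen[of M k "{..<3}"] genM by simp
  obtain \<psi> where \<psi>: "loop_hom M octonion_loop \<psi>" "\<forall>i<3. \<psi> (k i) = e i"
    using free_E_loop_extend[OF M in_E_octonion_loop] by auto
  show ?thesis
  proof (rule F.separation[OF in_E_octonion_loop])
    show "w \<in> lgen F (g ` {..<n})"
      using w genF by simp
  next
    fix \<sigma> :: "nat \<Rightarrow> oct"
    assume \<sigma>: "\<And>i. \<sigma> i \<in> {lone octonion_loop, e 0, e 1, e 2}"
    define f where "f i = (if \<sigma> i = e 0 then k 0 else if \<sigma> i = e 1 then k 1
      else if \<sigma> i = e 2 then k 2 else lone M)" for i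
    have "f i \<in> lcarrier M" if "i < n" for i
      using kM by (simp add: f_def)
    then obtain h where h: "loop_hom F M h" "\<forall>i<n. h (g i) = f i"
      using free_E_loop_extend[OF F ME \<open>countable (lcarrier M)\<close>] by blast
    have "\<psi> (f i) = \<sigma> i" for i
      using \<sigma>[of i] \<psi> loop_hom_one[OF \<psi>(1)] by (auto simp: f_def e_def)
    then show "\<exists>\<tau>. loop_hom F octonion_loop \<tau> \<and> (\<forall>i<n. \<tau> (g i) = \<sigma> i) \<and>
        \<tau> w = lone octonion_loop"
      using loop_hom_comp[OF h(1) \<psi>(1)] h(2) trivial[OF h(1)] loop_hom_one[OF \<psi>(1)] by auto
  qed (simp_all add: e_def oct_cocycle_def)
qed

theorem lemma4p1:
  fixes n :: nat and F :: "'a loop" and g :: "nat \<Rightarrow> 'a"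
    and M :: "'b loop" and k :: "nat \<Rightarrow> 'b"
  assumes "n \<ge> 3"
    and "free_E_loop n F g"
    and "free_E_loop 3 M k"
  shows "\<exists>(I :: ('a \<Rightarrow> 'b) set) \<phi>.
           loop_hom F (prod_loop I M) \<phi> \<and> inj_on \<phi> (lcarrier F)"
proof -
  let ?I = "{h. loop_hom F M h}"
  have loops: "is_loop F" "is_loop M"
    using assms(2,3) unfolding free_E_loop_def by (simp_all add: is_loop_if_in_E)
  have separating: "w = lone F" if "w \<in> lcarrier F" "\<And>h. h \<in> ?I \<Longrightarrow> h w = lone M" for w
    using free_E_loop_homs_separate[OF assms(2,3) that(1)] that(2) by simp
  have "loop_hom F (prod_loop ?I M) (\<lambda>x. \<lambda>h\<in>?I. h x)"
    by (rule loop_hom_eval_prod_loop) simp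
  moreover have "inj_on (\<lambda>x. \<lambda>h\<in>?I. h x) (lcarrier F)"
    by (rule inj_on_eval_if_separating[OF loops _ separating]) simp_all
  ultimately show ?thesis
    by blast
qed

end
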